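(* Let $n\geq 4$ and let $c$ be an exact $4$-coloring of $\mathcal{B}_n$ with $c(\emptyset)\neq c([n])$. Then $\mathcal{B}_n$ contains no rainbow induced copy of $\mathcal{B}_2$ if and only if $c$ is of Type 2, Type 3-1, Type 3-2, Type 4-1 or Type 4-2.
   Context: $\mathcal{B}_n$ is the Boolean lattice of subsets of $[n]$ under inclusion. For $X\subseteq Y$: $\mathcal{B}_{[X,Y]}=\{Z:X\subseteq Z\subseteq Y\}$, and $\mathcal{B}_{(X,Y)}$, $\mathcal{B}_{(X,Y]}$, $\mathcal{B}_{[X,Y)}$ are defined analogously with strict inclusion at the open ends. For $X\subsetneq Y$ define $\mathcal{B}^{Y\uparrow}_{(X,[n]]}=\{Z\in\mathcal{B}_{(X,[n]]}: Z\cap(Y\setminus X)\neq\emptyset\}$ and $\mathcal{B}^{X\downarrow}_{[\emptyset,Y)}=\{Z\in\mathcal{B}_{[\emptyset,Y)}: Y\setminus X\not\subseteq Z\}$. An exact $k$-coloring is a surjective map $c:\mathcal{B}_n\to[k]$. A rainbow induced copy of $\mathcal{B}_2$ is four sets $W_1\subsetneq W_2,W_3\subsetneq W_4$ with $W_2,W_3$ incomparable and pairwise distinct colors. "Families $\mathcal{F}_1,\dots,\mathcal{F}_r$ are monochromatically colored with distinct colors" means each is monochromatic and no two sets from different families share a color. In Types 2, 3-1, 3-2 there are $X_0,Y_0$ with $\emptyset\subsetneq X_0\subsetneq Y_0\subsetneq[n]$, $|Y_0|\ge|X_0|+2$. Type 2: the families $\mathcal{B}_{[\emptyset,Y_0]}\setminus\mathcal{B}_{[X_0,Y_0]}$,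 $\{X_0,Y_0\}$, $\mathcal{B}_{(X_0,Y_0)}$, $\mathcal{B}_{[X_0,[n]]}\setminus\mathcal{B}_{[X_0,Y_0]}$ are monochromatically colored with distinct colors, and each set in $\mathcal{B}_n\setminus(\mathcal{B}_{[\emptyset,Y_0]}\cup\mathcal{B}_{[X_0,[n]]})$ has the color of the first or the last family. Type 3-1: the families $\mathcal{B}_{[\emptyset,Y_0]}\setminus\mathcal{B}_{[X_0,Y_0]}$, $\{X_0\}\cup(\mathcal{B}^{Y_0\uparrow}_{(X_0,[n]]}\setminus\mathcal{B}_{(X_0,Y_0]})$, $\mathcal{B}_{(X_0,Y_0)}$, $\{Y_0\}$ are monochromatically colored with distinct colors, and each set in $\mathcal{B}_n\setminus(\mathcal{B}_{[\emptyset,Y_0]}\cup\mathcal{B}^{Y_0\uparrow}_{(X_0,[n]]})$ has the color of the first or the second family. Type 3-2: the families $\mathcal{B}_{[X_0,[n]]}\setminus\mathcal{B}_{[X_0,Y_0]}$, $\{Y_0\}\cup(\mathcal{B}^{X_0\downarrow}_{[\emptyset,Y_0)}\setminus\mathcal{B}_{[X_0,Y_0)})$, $\mathcal{B}_{(X_0,Y_0)}$, $\{X_0\}$ are monochromatically colored with distinct colors, and each set in $\mathcal{B}_n\setminus(\mathcal{B}_{[X_0,[n]]}\cup\mathcal{B}^{X_0\downarrow}_{[\emptyset,Y_0)})$ has the color of the first or the second family. Type 4-1: there are a set $X_0$ with $1\le|X_0|\le n-2$ and a nonempty family $\mathcal{Y}_0\subseteq\mathcal{B}_{(X_0,[n]]}$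 such that the families $\bigcup_{Y\in\mathcal{Y}_0}(\mathcal{B}_{[\emptyset,Y)}\setminus\mathcal{B}_{[X_0,Y)})$, $\{X_0\}$, $\mathcal{B}_{(X_0,[n]]}\setminus\mathcal{Y}_0$, $\mathcal{Y}_0$ are monochromatically colored with distinct colors, and each set in $\mathcal{B}_n\setminus(\mathcal{B}_{[X_0,[n]]}\cup\bigcup_{Y\in\mathcal{Y}_0}\mathcal{B}_{[\emptyset,Y)})$ has the color of the first or the third family. Type 4-2: there are a set $Y_0$ with $2\le|Y_0|\le n-1$ and a nonempty family $\mathcal{X}_0\subseteq\mathcal{B}_{(\emptyset,Y_0)}$ such that the families $\bigcup_{X\in\mathcal{X}_0}(\mathcal{B}_{(X,[n]]}\setminus\mathcal{B}_{(X,Y_0]})$, $\{Y_0\}$, $\mathcal{B}_{[\emptyset,Y_0)}\setminus\mathcal{X}_0$, $\mathcal{X}_0$ are monochromatically colored with distinct colors, and each set in $\mathcal{B}_n\setminus(\mathcal{B}_{[\emptyset,Y_0]}\cup\bigcup_{X\in\mathcal{X}_0}\mathcal{B}_{(X,[n]]})$ has the color of the first or the third family. *)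

theory Defs
  imports Main
begin

definition BL :: "nat \<Rightarrow> nat set set" where
  "BL n = Pow {1..n}"

definition ivl_cc :: "nat set \<Rightarrow> nat set \<Rightarrow> nat set set" where
  "ivl_cc X Y = {Z. X \<subseteq> Z \<and> Z \<subseteq> Y}"
definition ivl_oo :: "nat set \<Rightarrow> nat set \<Rightarrow> nat set set" where
  "ivl_oo X Y = {Z. X \<subset> Z \<and> Z \<subset> Y}"
definition ivl_oc :: "nat set \<Rightarrow> nat set \<Rightarrow> nat set set" where
  "ivl_oc X Y = {Z. X \<subset> Z \<and> Z \<subseteq> Y}"
definition ivl_co :: "nat set \<Rightarrow> nat set \<Rightarrow> nat set set" where
  "ivl_co X Y = {Z. X \<subseteq> Z \<and> Z \<subset> Y}"

definition up_fam :: "nat \<Rightarrow> nat set \<Rightarrow> nat set \<Rightarrow> nat set set" where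
  "up_fam n X Y = {Z \<in> ivl_oc X {1..n}. Z \<inter> (Y - X) \<noteq> {}}"
definition down_fam :: "nat set \<Rightarrow> nat set \<Rightarrow> nat set set" where
  "down_fam X Y = {Z \<in> ivl_co {} Y. \<not> (Y - X \<subseteq> Z)}"

definition exact_coloring :: "nat \<Rightarrow> nat \<Rightarrow> (nat set \<Rightarrow> nat) \<Rightarrow> bool" where
  "exact_coloring n k c \<longleftrightarrow> c ` BL n = {1..k}"

definition rainbow_B2 :: "nat \<Rightarrow> (nat set \<Rightarrow> nat) \<Rightarrow> bool" where
  "rainbow_B2 n c \<longleftrightarrow> (\<exists>W1 W2 W3 W4. W1 \<in> BL n \<and> W2 \<in> BL n \<and> W3 \<in> BL n \<and> W4 \<in> BL n \<and>
      W1 \<subset> W2 \<and> W1 \<subset> W3 \<and> W2 \<subset> W4 \<and> W3 \<subset> W4 \<and>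
      \<not> W2 \<subseteq> W3 \<and> \<not> W3 \<subseteq> W2 \<and>
      c W1 \<noteq> c W2 \<and> c W1 \<noteq> c W3 \<and> c W1 \<noteq> c W4 \<and>
      c W2 \<noteq> c W3 \<and> c W2 \<noteq> c W4 \<and> c W3 \<noteq> c W4)"

definition mono_distinct :: "(nat set \<Rightarrow> nat) \<Rightarrow> nat set set list \<Rightarrow> bool" where
  "mono_distinct c Fs \<longleftrightarrow>
     (\<forall>F \<in> set Fs. \<forall>A \<in> F. \<forall>B \<in> F. c A = c B) \<and>
     (\<forall>i < length Fs. \<forall>j < length Fs. i \<noteq> j \<longrightarrow> (\<forall>A \<in> Fs ! i. \<forall>B \<in> Fs ! j. c A \<noteq> c B))"

definition has_color_of :: "(nat set \<Rightarrow> nat) \<Rightarrow> nat set \<Rightarrow> nat set set \<Rightarrow> bool" where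
  "has_color_of c Z F \<longleftrightarrow> (\<exists>A \<in> F. c Z = c A)"

definition type2 :: "nat \<Rightarrow> (nat set \<Rightarrow> nat) \<Rightarrow> bool" where
  "type2 n c \<longleftrightarrow> (\<exists>X0 Y0. {} \<subset> X0 \<and> X0 \<subset> Y0 \<and> Y0 \<subset> {1..n} \<and> card Y0 \<ge> card X0 + 2 \<and>
     (let F1 = ivl_cc {} Y0 - ivl_cc X0 Y0; F2 = {X0, Y0}; F3 = ivl_oo X0 Y0;
          F4 = ivl_cc X0 {1..n} - ivl_cc X0 Y0 in
      mono_distinct c [F1, F2, F3, F4] \<and>
      (\<forall>Z \<in> BL n - (ivl_cc {} Y0 \<union> ivl_cc X0 {1..n}). has_color_of c Z F1 \<or> has_color_of c Z F4)))"

definition type31 :: "nat \<Rightarrow> (nat set \<Rightarrow> nat) \<Rightarrow> bool" where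
  "type31 n c \<longleftrightarrow> (\<exists>X0 Y0. {} \<subset> X0 \<and> X0 \<subset> Y0 \<and> Y0 \<subset> {1..n} \<and> card Y0 \<ge> card X0 + 2 \<and>
     (let F1 = ivl_cc {} Y0 - ivl_cc X0 Y0; F2 = {X0} \<union> (up_fam n X0 Y0 - ivl_oc X0 Y0);
          F3 = ivl_oo X0 Y0; F4 = {Y0} in
      mono_distinct c [F1, F2, F3, F4] \<and>
      (\<forall>Z \<in> BL n - (ivl_cc {} Y0 \<union> up_fam n X0 Y0). has_color_of c Z F1 \<or> has_color_of c Z F2)))"

definition type32 :: "nat \<Rightarrow> (nat set \<Rightarrow> nat) \<Rightarrow> bool" where
  "type32 n c \<longleftrightarrow> (\<exists>X0 Y0. {} \<subset> X0 \<and> X0 \<subset> Y0 \<and> Y0 \<subset> {1..n} \<and> card Y0 \<ge> card X0 + 2 \<and>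
     (let F1 = ivl_cc X0 {1..n} - ivl_cc X0 Y0; F2 = {Y0} \<union> (down_fam X0 Y0 - ivl_co X0 Y0);
          F3 = ivl_oo X0 Y0; F4 = {X0} in
      mono_distinct c [F1, F2, F3, F4] \<and>
      (\<forall>Z \<in> BL n - (ivl_cc X0 {1..n} \<union> down_fam X0 Y0). has_color_of c Z F1 \<or> has_color_of c Z F2)))"

definition type41 :: "nat \<Rightarrow> (nat set \<Rightarrow> nat) \<Rightarrow> bool" where
  "type41 n c \<longleftrightarrow> (\<exists>X0 \<YY>0. X0 \<subseteq> {1..n} \<and> 1 \<le> card X0 \<and> card X0 + 2 \<le> n \<and>
     \<YY>0 \<noteq> {} \<and> \<YY>0 \<subseteq> ivl_oc X0 {1..n} \<and>
     (let F1 = (\<Union>Y \<in> \<YY>0. ivl_co {} Y - ivl_co X0 Y); F2 = {X0};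
          F3 = ivl_oc X0 {1..n} - \<YY>0; F4 = \<YY>0 in
      mono_distinct c [F1, F2, F3, F4] \<and>
      (\<forall>Z \<in> BL n - (ivl_cc X0 {1..n} \<union> (\<Union>Y \<in> \<YY>0. ivl_co {} Y)).
          has_color_of c Z F1 \<or> has_color_of c Z F3)))"

definition type42 :: "nat \<Rightarrow> (nat set \<Rightarrow> nat) \<Rightarrow> bool" where
  "type42 n c \<longleftrightarrow> (\<exists>Y0 \<XX>0. Y0 \<subseteq> {1..n} \<and> 2 \<le> card Y0 \<and> card Y0 + 1 \<le> n \<and>
     \<XX>0 \<noteq> {} \<and> \<XX>0 \<subseteq> ivl_oo {} Y0 \<and>
     (let F1 = (\<Union>X \<in> \<XX>0. ivl_oc X {1..n} - ivl_oc X Y0); F2 = {Y0};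
          F3 = ivl_co {} Y0 - \<XX>0; F4 = \<XX>0 in
      mono_distinct c [F1, F2, F3, F4] \<and>
      (\<forall>Z \<in> BL n - (ivl_cc {} Y0 \<union> (\<Union>X \<in> \<XX>0. ivl_oc X {1..n})).
          has_color_of c Z F1 \<or> has_color_of c Z F3)))"

end

theory Submission
  imports Defs
begin

declare One_nat_def [simp del]

definition induced_B2 :: "nat set \<Rightarrow> nat set \<Rightarrow> nat set \<Rightarrow> nat set \<Rightarrow> bool" where
  "induced_B2 W1 W2 W3 W4 \<longleftrightarrow>
     W1 \<subset> W2 \<and> W1 \<subset> W3 \<and> W2 \<subset> W4 \<and> W3 \<subset> W4 \<and> \<not> W2 \<subseteq> W3 \<and> \<not> W3 \<subseteq> W2"

lemma rainbow_B2_iff: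
  "rainbow_B2 n c \<longleftrightarrow> (\<exists>W1 W2 W3 W4. W4 \<subseteq> {1..n} \<and> induced_B2 W1 W2 W3 W4 \<and>
      distinct [c W1, c W2, c W3, c W4])"
proof
  assume "rainbow_B2 n c"
  then obtain W1 W2 W3 W4 where "W4 \<in> BL n" "induced_B2 W1 W2 W3 W4"
    "distinct [c W1, c W2, c W3, c W4]"
    unfolding rainbow_B2_def induced_B2_def by simp blast
  then show "\<exists>W1 W2 W3 W4. W4 \<subseteq> {1..n} \<and> induced_B2 W1 W2 W3 W4 \<and>
      distinct [c W1, c W2, c W3, c W4]"
    unfolding BL_def by blast
next
  assume "\<exists>W1 W2 W3 W4. W4 \<subseteq> {1..n} \<and> induced_B2 W1 W2 W3 W4 \<and>
      distinct [c W1, c W2, c W3, c W4]"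
  then obtain W1 W2 W3 W4 where "W4 \<subseteq> {1..n}" "induced_B2 W1 W2 W3 W4"
    "distinct [c W1, c W2, c W3, c W4]"
    by blast
  then show "rainbow_B2 n c"
    unfolding rainbow_B2_def induced_B2_def BL_def
    by (intro exI[of _ W1] exI[of _ W2] exI[of _ W3] exI[of _ W4]) auto
qed

lemma induced_B2_distinct: "induced_B2 W1 W2 W3 W4 \<Longrightarrow> distinct [W1, W2, W3, W4]"
  unfolding induced_B2_def by auto

lemma ex_less_4: "(\<exists>i<4::nat. P i) \<longleftrightarrow> P 0 \<or> P 1 \<or> P 2 \<or> P 3"
  by (auto simp: numeral_eq_Suc less_Suc_eq One_nat_def)

lemma induced_B2_subset_iff:
  assumes "induced_B2 W1 W2 W3 W4" "A \<in> {W1, W2, W3, W4}" "B \<in> {W1, W2, W3, W4}"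
  shows "A \<subseteq> B \<longleftrightarrow> A = B \<or> A = W1 \<or> B = W4"
  using assms unfolding induced_B2_def by auto

lemma has_color_of_if_mem: "Z \<in> F \<Longrightarrow> has_color_of c Z F"
  unfolding has_color_of_def by blast

lemma mono_distinct_has_color_of_eq:
  assumes "mono_distinct c Fs" "F \<in> set Fs" "has_color_of c Z F" "has_color_of c Z' F"
  shows "c Z = c Z'"
  using assms unfolding mono_distinct_def has_color_of_def by metis

lemma not_rainbow_B2_if_zoned:
  assumes mono: "mono_distinct c [F1, F2, F3, F4]"
    and zoned: "\<And>Z. Z \<in> BL n \<Longrightarrow>
      has_color_of c Z F1 \<and> P1 Z \<or> has_color_of c Z F2 \<and> P2 Z \<or>
      has_color_of c Z F3 \<and> P3 Z \<or> has_color_of c Z F4 \<and> P4 Z"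
    and excluded: "\<And>W1 W2 W3 W4 A1 A2 A3 A4. induced_B2 W1 W2 W3 W4 \<Longrightarrow>
      distinct [A1, A2, A3, A4] \<Longrightarrow> {A1, A2, A3, A4} \<subseteq> {W1, W2, W3, W4} \<Longrightarrow>
      P1 A1 \<Longrightarrow> P2 A2 \<Longrightarrow> P3 A3 \<Longrightarrow> P4 A4 \<Longrightarrow> False"
  shows "\<not> rainbow_B2 n c"
proof
  assume "rainbow_B2 n c"
  then obtain W1 W2 W3 W4 where "W4 \<subseteq> {1..n}" and B2: "induced_B2 W1 W2 W3 W4"
    and rainbow: "distinct [c W1, c W2, c W3, c W4]"
    unfolding rainbow_B2_iff by blast
  define Ws where "Ws = [W1, W2, W3, W4]"
  define Fs where "Fs = [F1, F2, F3, F4]"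
  define Ps where "Ps = [P1, P2, P3, P4]"
  have "length Ws = 4"
    by (simp add: Ws_def)
  have "\<forall>j<4. \<exists>i<4. has_color_of c (Ws ! j) (Fs ! i) \<and> (Ps ! i) (Ws ! j)"
  proof (intro allI impI)
    fix j :: nat assume "j < 4"
    moreover have "set Ws \<subseteq> BL n"
      using \<open>W4 \<subseteq> {1..n}\<close> B2 by (auto simp: Ws_def BL_def induced_B2_def)
    ultimately have "Ws ! j \<in> BL n"
      using nth_mem[of j Ws] by (auto simp: Ws_def)
    from zoned[OF this] show "\<exists>i<4. has_color_of c (Ws ! j) (Fs ! i) \<and> (Ps ! i) (Ws ! j)"
      unfolding ex_less_4 Fs_def Ps_def by simp
  qed
  then obtain idx where idx: "\<And>j. j < 4 \<Longrightarrow>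
      idx j < 4 \<and> has_color_of c (Ws ! j) (Fs ! idx j) \<and> (Ps ! idx j) (Ws ! j)"
    by metis
  have "inj_on idx {..<4}"
  proof (rule inj_onI)
    fix j k assume "j \<in> {..<4}" "k \<in> {..<4}" "idx j = idx k"
    then have "Fs ! idx j \<in> set Fs" "has_color_of c (Ws ! j) (Fs ! idx j)"
      "has_color_of c (Ws ! k) (Fs ! idx j)"
      using idx[of j] idx[of k] nth_mem[of "idx j" Fs] by (auto simp: Fs_def)
    then have "c (Ws ! j) = c (Ws ! k)"
      by (intro mono_distinct_has_color_of_eq[OF mono[folded Fs_def]])
    then have "map c Ws ! j = map c Ws ! k"
      using \<open>j \<in> {..<4}\<close> \<open>k \<in> {..<4}\<close> \<open>length Ws = 4\<close> by simp
    with rainbow \<open>j \<in> {..<4}\<close> \<open>k \<in> {..<4}\<close> show "j = k"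
      by (simp add: nth_eq_iff_index_eq Ws_def)
  qed
  then have "idx ` {..<4} = {..<4}"
    using idx by (intro endo_inj_surj) auto
  then have "\<forall>i<4. \<exists>j<4. idx j = i"
    by (metis imageE lessThan_iff)
  then obtain \<sigma> where \<sigma>: "\<And>i. i < 4 \<Longrightarrow> \<sigma> i < 4 \<and> idx (\<sigma> i) = i"
    by metis
  define A where "A i = Ws ! \<sigma> i" for i
  have "distinct Ws"
    using induced_B2_distinct[OF B2] by (simp add: Ws_def)
  have A_in: "A i \<in> set Ws" if "i < 4" for i
    using \<sigma>[OF that] \<open>length Ws = 4\<close> by (simp add: A_def)
  have A_inj: "i = j" if "A i = A j" "i < 4" "j < 4" for i j
  proof -
    have "\<sigma> i = \<sigma> j"
      using that \<sigma> nth_eq_iff_index_eq[OF \<open>distinct Ws\<close>] \<open>length Ws = 4\<close>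
      by (simp add: A_def)
    then show "i = j"
      using \<sigma> that by metis
  qed
  have A_distinct: "distinct [A 0, A 1, A 2, A 3]"
    using A_inj[of 0 1] A_inj[of 0 2] A_inj[of 0 3] A_inj[of 1 2] A_inj[of 1 3] A_inj[of 2 3]
    by auto
  have A_set: "{A 0, A 1, A 2, A 3} \<subseteq> {W1, W2, W3, W4}"
    using A_in[of 0] A_in[of 1] A_in[of 2] A_in[of 3] by (simp add: Ws_def)
  have zones: "(Ps ! i) (A i)" if "i < 4" for i
    using idx[of "\<sigma> i"] \<sigma>[OF that] by (simp add: A_def)
  show False
    using excluded[OF B2 A_distinct A_set] zones[of 0] zones[of 1] zones[of 2] zones[of 3]
    by (simp add: Ps_def)
qed

lemma mono_distinct_4I:
  assumes "\<forall>Z \<in> F1. c Z = k1" "\<forall>Z \<in> F2. c Z = k2" "\<forall>Z \<in> F3. c Z = k3" "\<forall>Z \<in> F4. c Z = k4"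
    and "distinct [k1, k2, k3, k4]"
  shows "mono_distinct c [F1, F2, F3, F4]"
proof -
  have colour: "\<forall>Z \<in> [F1, F2, F3, F4] ! i. c Z = [k1, k2, k3, k4] ! i" if "i < 4" for i
    using that assms(1-4) by (auto simp: numeral_eq_Suc less_Suc_eq One_nat_def)
  show ?thesis
    unfolding mono_distinct_def
  proof (intro conjI allI impI ballI)
    fix F A B assume "F \<in> set [F1, F2, F3, F4]" "A \<in> F" "B \<in> F"
    then show "c A = c B"
      using assms(1-4) by auto
  next
    fix i j A B assume "i < length [F1, F2, F3, F4]" "j < length [F1, F2, F3, F4]" "i \<noteq> j"
      "A \<in> [F1, F2, F3, F4] ! i" "B \<in> [F1, F2, F3, F4] ! j"
    then show "c A \<noteq> c B"
      using colour[of i] colour[of j] nth_eq_iff_index_eq[OF assms(5), of i j] by auto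
  qed
qed

lemma ex_incomparable_in_open_interval:
  assumes "u \<subset> A" "A \<subset> B" "B \<subset> s"
  obtains W where "u \<subset> W" "W \<subset> s" "\<not> W \<subseteq> A" "\<not> A \<subseteq> W" "\<not> W \<subseteq> B" "\<not> B \<subseteq> W"
proof -
  obtain d e f where "d \<in> A - u" "e \<in> B - A" "f \<in> s - B"
    using assms by blast
  then show ?thesis
    using assms by (intro that[of "s - {d}"]) auto
qed

lemma open_interval_spread:
  assumes G: "u \<subset> G" "G \<subset> s" "P G"
    and step: "\<And>W W'. u \<subset> W \<Longrightarrow> W \<subset> s \<Longrightarrow> u \<subset> W' \<Longrightarrow> W' \<subset> s \<Longrightarrow>
      \<not> W \<subseteq> W' \<Longrightarrow> \<not> W' \<subseteq> W \<Longrightarrow> P W \<Longrightarrow> P W'"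
    and Z: "u \<subset> Z" "Z \<subset> s"
  shows "P Z"
proof (cases "Z \<subset> G \<or> G \<subset> Z")
  case True
  obtain W where "u \<subset> W" "W \<subset> s" "\<not> W \<subseteq> G" "\<not> G \<subseteq> W" "\<not> W \<subseteq> Z" "\<not> Z \<subseteq> W"
    using True G Z ex_incomparable_in_open_interval by metis
  then show ?thesis
    using step[of G W] step[of W Z] G Z by blast
next
  case False
  then show ?thesis
    using step[of G Z] G Z by (cases "Z = G") auto
qed

lemma comparable_with_open_interval:
  assumes "q1 \<subset> p" "p \<subset> q2"
    and comparable: "\<And>W. q1 \<subset> W \<Longrightarrow> W \<subset> q2 \<Longrightarrow> W \<subseteq> q \<or> q \<subseteq> W"
  shows "q \<subseteq> q1 \<or> q2 \<subseteq> q"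
proof (rule ccontr)
  assume "\<not> (q \<subseteq> q1 \<or> q2 \<subseteq> q)"
  then obtain k j where k: "k \<in> q" "k \<notin> q1" and j: "j \<in> q2" "j \<notin> q"
    by blast
  obtain d1 d2 where "d1 \<in> p - q1" "d2 \<in> q2 - p"
    using assms(1,2) by blast
  consider "j \<notin> q1" | "j \<in> q1" "k \<in> q2" | "j \<in> q1" "k \<notin> q2"
    by blast
  then show False
  proof cases
    case 1
    then show False
      using comparable[of "insert j q1"] assms(1,2) k j \<open>d1 \<in> p - q1\<close> \<open>d2 \<in> q2 - p\<close> by auto
  next
    case 2
    then show False
      using comparable[of "q2 - {k}"] assms(1,2) k j \<open>d1 \<in> p - q1\<close> \<open>d2 \<in> q2 - p\<close> by auto
  next
    case 3
    then show False
      using comparable[of p] assms(1,2) k j by auto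
  qed
qed

lemma ex_psubset_minimal: "finite F \<Longrightarrow> B \<in> F \<Longrightarrow> \<exists>u \<in> F. \<forall>v \<in> F. \<not> v \<subset> u"
  using finite_has_minimal2[of F B] by (metis psubset_imp_subset psubset_eq)

lemma ex_psubset_maximal: "finite F \<Longrightarrow> B \<in> F \<Longrightarrow> \<exists>u \<in> F. \<forall>v \<in> F. \<not> u \<subset> v"
  using finite_has_maximal2[of F B] by (metis psubset_imp_subset psubset_eq)

definition cpl :: "nat \<Rightarrow> nat set \<Rightarrow> nat set" where
  "cpl n Z = sym_diff Z {1..n}"

lemma cpl_cpl [simp]: "cpl n (cpl n Z) = Z"
  unfolding cpl_def by auto

lemma comp_cpl_cpl [simp]: "c \<circ> cpl n \<circ> cpl n = c"
  by (simp add: fun_eq_iff)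

lemma inj_cpl: "inj (cpl n)"
  by (metis cpl_cpl injI)

lemma image_cpl: "cpl n ` S = {Z. cpl n Z \<in> S}"
  by (auto simp: image_iff) (metis cpl_cpl)

lemma cpl_empty [simp]: "cpl n {} = {1..n}"
  and cpl_full [simp]: "cpl n {1..n} = {}"
  and cpl_subset_iff [simp]: "cpl n Z \<subseteq> {1..n} \<longleftrightarrow> Z \<subseteq> {1..n}"
  unfolding cpl_def by auto

lemma cpl_subset_cpl_iff: "A \<subseteq> {1..n} \<Longrightarrow> B \<subseteq> {1..n} \<Longrightarrow> cpl n A \<subseteq> cpl n B \<longleftrightarrow> B \<subseteq> A"
  unfolding cpl_def by auto

lemma cpl_psubset_cpl_iff: "A \<subseteq> {1..n} \<Longrightarrow> B \<subseteq> {1..n} \<Longrightarrow> cpl n A \<subset> cpl n B \<longleftrightarrow> B \<subset> A"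
  by (simp add: less_le_not_le cpl_subset_cpl_iff)

lemma cpl_eq: "Z \<subseteq> {1..n} \<Longrightarrow> cpl n Z = {1..n} - Z"
  unfolding cpl_def by auto

lemma card_cpl: "Z \<subseteq> {1..n} \<Longrightarrow> card (cpl n Z) = n - card Z"
  by (simp add: cpl_eq card_Diff_subset finite_subset)

lemma image_cpl_BL [simp]: "cpl n ` BL n = BL n"
  unfolding image_cpl BL_def Pow_def mem_Collect_eq cpl_subset_iff ..

lemma image_cpl_ivl_cc: "A \<subseteq> {1..n} \<Longrightarrow> B \<subseteq> {1..n} \<Longrightarrow> cpl n ` ivl_cc A B = ivl_cc (cpl n B) (cpl n A)"
  unfolding image_cpl ivl_cc_def cpl_def by auto

lemma image_cpl_ivl_oo: "A \<subseteq> {1..n} \<Longrightarrow> B \<subseteq> {1..n} \<Longrightarrow> cpl n ` ivl_oo A B = ivl_oo (cpl n B) (cpl n A)"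
  unfolding image_cpl ivl_oo_def cpl_def less_le_not_le by auto

lemma image_cpl_ivl_co: "A \<subseteq> {1..n} \<Longrightarrow> B \<subseteq> {1..n} \<Longrightarrow> cpl n ` ivl_co A B = ivl_oc (cpl n B) (cpl n A)"
  unfolding image_cpl ivl_co_def ivl_oc_def cpl_def less_le_not_le by auto

lemma image_cpl_ivl_oc: "A \<subseteq> {1..n} \<Longrightarrow> B \<subseteq> {1..n} \<Longrightarrow> cpl n ` ivl_oc A B = ivl_co (cpl n B) (cpl n A)"
  unfolding image_cpl ivl_co_def ivl_oc_def cpl_def less_le_not_le by auto

lemma induced_B2_cpl:
  assumes "W4 \<subseteq> {1..n}" "induced_B2 W1 W2 W3 W4"
  shows "induced_B2 (cpl n W4) (cpl n W2) (cpl n W3) (cpl n W1)"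
  using assms unfolding induced_B2_def cpl_def less_le_not_le by blast

lemma rainbow_B2_cpl_if_rainbow_B2:
  assumes "rainbow_B2 n c" shows "rainbow_B2 n (c \<circ> cpl n)"
proof -
  obtain W1 W2 W3 W4 where "W4 \<subseteq> {1..n}" "induced_B2 W1 W2 W3 W4"
    "distinct [c W1, c W2, c W3, c W4]"
    using assms unfolding rainbow_B2_iff by blast
  moreover have "W1 \<subseteq> {1..n}"
    using calculation unfolding induced_B2_def by auto
  ultimately show ?thesis
    unfolding rainbow_B2_iff
    by (intro exI[of _ "cpl n W4"] exI[of _ "cpl n W2"] exI[of _ "cpl n W3"] exI[of _ "cpl n W1"])
      (auto simp: induced_B2_cpl)
qed

lemma rainbow_B2_cpl_iff [simp]: "rainbow_B2 n (c \<circ> cpl n) \<longleftrightarrow> rainbow_B2 n c"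
  using rainbow_B2_cpl_if_rainbow_B2[of n c] rainbow_B2_cpl_if_rainbow_B2[of n "c \<circ> cpl n"]
  by auto

lemma cpl_eq_cpl_iff [simp]: "cpl n A = cpl n B \<longleftrightarrow> A = B"
  by (metis cpl_cpl)

lemma mono_distinct_image: "mono_distinct c (map ((`) f) Fs) \<longleftrightarrow> mono_distinct (c \<circ> f) Fs"
  unfolding mono_distinct_def by auto

lemma has_color_of_image: "has_color_of c (f Z) (f ` F) \<longleftrightarrow> has_color_of (c \<circ> f) Z F"
  unfolding has_color_of_def by auto

definition type31_at :: "nat \<Rightarrow> (nat set \<Rightarrow> nat) \<Rightarrow> nat set \<Rightarrow> nat set \<Rightarrow> bool" where
  "type31_at n c X0 Y0 \<longleftrightarrow> {} \<subset> X0 \<and> X0 \<subset> Y0 \<and> Y0 \<subset> {1..n} \<and> card Y0 \<ge> card X0 + 2 \<and>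
     (let F1 = ivl_cc {} Y0 - ivl_cc X0 Y0; F2 = {X0} \<union> (up_fam n X0 Y0 - ivl_oc X0 Y0);
          F3 = ivl_oo X0 Y0; F4 = {Y0} in
      mono_distinct c [F1, F2, F3, F4] \<and>
      (\<forall>Z \<in> BL n - (ivl_cc {} Y0 \<union> up_fam n X0 Y0). has_color_of c Z F1 \<or> has_color_of c Z F2))"

definition type32_at :: "nat \<Rightarrow> (nat set \<Rightarrow> nat) \<Rightarrow> nat set \<Rightarrow> nat set \<Rightarrow> bool" where
  "type32_at n c X0 Y0 \<longleftrightarrow> {} \<subset> X0 \<and> X0 \<subset> Y0 \<and> Y0 \<subset> {1..n} \<and> card Y0 \<ge> card X0 + 2 \<and>
     (let F1 = ivl_cc X0 {1..n} - ivl_cc X0 Y0; F2 = {Y0} \<union> (down_fam X0 Y0 - ivl_co X0 Y0);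
          F3 = ivl_oo X0 Y0; F4 = {X0} in
      mono_distinct c [F1, F2, F3, F4] \<and>
      (\<forall>Z \<in> BL n - (ivl_cc X0 {1..n} \<union> down_fam X0 Y0). has_color_of c Z F1 \<or> has_color_of c Z F2))"

definition type41_at :: "nat \<Rightarrow> (nat set \<Rightarrow> nat) \<Rightarrow> nat set \<Rightarrow> nat set set \<Rightarrow> bool" where
  "type41_at n c X0 \<YY>0 \<longleftrightarrow> X0 \<subseteq> {1..n} \<and> 1 \<le> card X0 \<and> card X0 + 2 \<le> n \<and>
     \<YY>0 \<noteq> {} \<and> \<YY>0 \<subseteq> ivl_oc X0 {1..n} \<and>
     (let F1 = (\<Union>Y \<in> \<YY>0. ivl_co {} Y - ivl_co X0 Y); F2 = {X0};
          F3 = ivl_oc X0 {1..n} - \<YY>0; F4 = \<YY>0 in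
      mono_distinct c [F1, F2, F3, F4] \<and>
      (\<forall>Z \<in> BL n - (ivl_cc X0 {1..n} \<union> (\<Union>Y \<in> \<YY>0. ivl_co {} Y)).
          has_color_of c Z F1 \<or> has_color_of c Z F3))"

definition type42_at :: "nat \<Rightarrow> (nat set \<Rightarrow> nat) \<Rightarrow> nat set \<Rightarrow> nat set set \<Rightarrow> bool" where
  "type42_at n c Y0 \<XX>0 \<longleftrightarrow> Y0 \<subseteq> {1..n} \<and> 2 \<le> card Y0 \<and> card Y0 + 1 \<le> n \<and>
     \<XX>0 \<noteq> {} \<and> \<XX>0 \<subseteq> ivl_oo {} Y0 \<and>
     (let F1 = (\<Union>X \<in> \<XX>0. ivl_oc X {1..n} - ivl_oc X Y0); F2 = {Y0};
          F3 = ivl_co {} Y0 - \<XX>0; F4 = \<XX>0 in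
      mono_distinct c [F1, F2, F3, F4] \<and>
      (\<forall>Z \<in> BL n - (ivl_cc {} Y0 \<union> (\<Union>X \<in> \<XX>0. ivl_oc X {1..n})).
          has_color_of c Z F1 \<or> has_color_of c Z F3))"

lemma type31_iff: "type31 n c \<longleftrightarrow> (\<exists>X0 Y0. type31_at n c X0 Y0)"
  unfolding type31_def type31_at_def ..

lemma type32_iff: "type32 n c \<longleftrightarrow> (\<exists>X0 Y0. type32_at n c X0 Y0)"
  unfolding type32_def type32_at_def ..

lemma type41_iff: "type41 n c \<longleftrightarrow> (\<exists>X0 \<YY>0. type41_at n c X0 \<YY>0)"
  unfolding type41_def type41_at_def ..

lemma type42_iff: "type42 n c \<longleftrightarrow> (\<exists>Y0 \<XX>0. type42_at n c Y0 \<XX>0)"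
  unfolding type42_def type42_at_def ..

lemma image_cpl_down_fam: "X \<subseteq> {1..n} \<Longrightarrow> Y \<subseteq> {1..n} \<Longrightarrow> cpl n ` down_fam X Y = up_fam n (cpl n Y) (cpl n X)"
  unfolding image_cpl up_fam_def down_fam_def ivl_co_def ivl_oc_def cpl_def less_le_not_le by auto

lemma empty_psubset_cpl_iff: "Y \<subseteq> {1..n} \<Longrightarrow> {} \<subset> cpl n Y \<longleftrightarrow> Y \<subset> {1..n}"
  and cpl_psubset_full_iff: "X \<subseteq> {1..n} \<Longrightarrow> cpl n X \<subset> {1..n} \<longleftrightarrow> {} \<subset> X"
  unfolding cpl_def by auto

lemma type31_at_cpl_iff:
  assumes "X \<subseteq> {1..n}" "Y \<subseteq> {1..n}"
  shows "type31_at n (c \<circ> cpl n) (cpl n Y) (cpl n X) \<longleftrightarrow> type32_at n c X Y"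
proof -
  have "card X \<le> n" "card Y \<le> n"
    using assms card_mono[of "{1..n}"] by auto
  then have conditions: "{} \<subset> cpl n Y \<and> cpl n Y \<subset> cpl n X \<and> cpl n X \<subset> {1..n} \<and>
      card (cpl n X) \<ge> card (cpl n Y) + 2 \<longleftrightarrow>
      {} \<subset> X \<and> X \<subset> Y \<and> Y \<subset> {1..n} \<and> card Y \<ge> card X + 2"
    using assms by (auto simp: empty_psubset_cpl_iff cpl_psubset_full_iff cpl_psubset_cpl_iff card_cpl)
  have families:
    "ivl_cc {} (cpl n X) - ivl_cc (cpl n Y) (cpl n X) = cpl n ` (ivl_cc X {1..n} - ivl_cc X Y)"
    "{cpl n Y} \<union> (up_fam n (cpl n Y) (cpl n X) - ivl_oc (cpl n Y) (cpl n X)) =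
       cpl n ` ({Y} \<union> (down_fam X Y - ivl_co X Y))"
    "ivl_oo (cpl n Y) (cpl n X) = cpl n ` ivl_oo X Y"
    "{cpl n X} = cpl n ` {X}"
    "BL n - (ivl_cc {} (cpl n X) \<union> up_fam n (cpl n Y) (cpl n X)) =
       cpl n ` (BL n - (ivl_cc X {1..n} \<union> down_fam X Y))"
    using assms
    by (simp_all add: image_Un image_set_diff[OF inj_cpl] image_cpl_ivl_cc image_cpl_ivl_oo
        image_cpl_ivl_co image_cpl_down_fam)
  have "mono_distinct (c \<circ> cpl n) (map ((`) (cpl n))
      [ivl_cc X {1..n} - ivl_cc X Y, {Y} \<union> (down_fam X Y - ivl_co X Y), ivl_oo X Y, {X}]) \<longleftrightarrow>
      mono_distinct c [ivl_cc X {1..n} - ivl_cc X Y, {Y} \<union> (down_fam X Y - ivl_co X Y), ivl_oo X Y, {X}]"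
    by (simp only: mono_distinct_image comp_cpl_cpl)
  moreover have "(\<forall>Z \<in> cpl n ` R. has_color_of (c \<circ> cpl n) Z (cpl n ` G1) \<or> has_color_of (c \<circ> cpl n) Z (cpl n ` G2))
      \<longleftrightarrow> (\<forall>Z \<in> R. has_color_of c Z G1 \<or> has_color_of c Z G2)" for R G1 G2
    by (simp only: ball_simps has_color_of_image comp_cpl_cpl)
  ultimately show ?thesis
    unfolding type31_at_def type32_at_def Let_def families list.map
    using conditions by blast
qed

lemma type32_iff_type31_cpl: "type32 n c \<longleftrightarrow> type31 n (c \<circ> cpl n)"
proof
  assume "type32 n c"
  then obtain X Y where "type32_at n c X Y"
    unfolding type32_iff by blast
  moreover have "X \<subseteq> {1..n}" "Y \<subseteq> {1..n}"
    using calculation unfolding type32_at_def by auto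
  ultimately show "type31 n (c \<circ> cpl n)"
    unfolding type31_iff using type31_at_cpl_iff by blast
next
  assume "type31 n (c \<circ> cpl n)"
  then obtain X Y where "type31_at n (c \<circ> cpl n) X Y"
    unfolding type31_iff by blast
  moreover have "X \<subseteq> {1..n}" "Y \<subseteq> {1..n}"
    using calculation unfolding type31_at_def by auto
  ultimately show "type32 n c"
    unfolding type32_iff using type31_at_cpl_iff[of "cpl n Y" n "cpl n X" c] by auto
qed

lemma type42_at_cpl_iff:
  assumes X: "X \<subseteq> {1..n}" and \<YY>: "\<YY> \<subseteq> ivl_oo X {1..n}"
  shows "type42_at n (c \<circ> cpl n) (cpl n X) (cpl n ` \<YY>) \<longleftrightarrow> type41_at n c X \<YY>"
proof -
  have Y: "Y \<subseteq> {1..n}" if "Y \<in> \<YY>" for Y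
    using \<YY> that unfolding ivl_oo_def by auto
  have "card X \<le> n"
    using X card_mono[of "{1..n}"] by auto
  moreover have "cpl n ` \<YY> \<subseteq> ivl_oo {} (cpl n X)"
    using image_mono[OF \<YY>, of "cpl n"] X by (simp add: image_cpl_ivl_oo)
  moreover have "\<YY> \<subseteq> ivl_oc X {1..n}"
    using \<YY> by (auto simp: ivl_oo_def ivl_oc_def)
  ultimately have conditions: "cpl n X \<subseteq> {1..n} \<and> 2 \<le> card (cpl n X) \<and> card (cpl n X) + 1 \<le> n \<and>
      cpl n ` \<YY> \<noteq> {} \<and> cpl n ` \<YY> \<subseteq> ivl_oo {} (cpl n X) \<and> T \<longleftrightarrow>
      X \<subseteq> {1..n} \<and> 1 \<le> card X \<and> card X + 2 \<le> n \<and> \<YY> \<noteq> {} \<and> \<YY> \<subseteq> ivl_oc X {1..n} \<and> T" for T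
    using X by (auto simp: card_cpl)
  have families:
    "(\<Union>X' \<in> cpl n ` \<YY>. ivl_oc X' {1..n} - ivl_oc X' (cpl n X)) =
       cpl n ` (\<Union>Y \<in> \<YY>. ivl_co {} Y - ivl_co X Y)"
    "ivl_co {} (cpl n X) - cpl n ` \<YY> = cpl n ` (ivl_oc X {1..n} - \<YY>)"
    "{cpl n X} = cpl n ` {X}"
    "BL n - (ivl_cc {} (cpl n X) \<union> (\<Union>X' \<in> cpl n ` \<YY>. ivl_oc X' {1..n})) =
       cpl n ` (BL n - (ivl_cc X {1..n} \<union> (\<Union>Y \<in> \<YY>. ivl_co {} Y)))"
    using X Y
    by (simp_all add: image_Un image_UN image_set_diff[OF inj_cpl] image_cpl_ivl_cc image_cpl_ivl_co
        image_cpl_ivl_oc cong: SUP_cong_simp)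
  have mono: "mono_distinct (c \<circ> cpl n) (map ((`) (cpl n))
      [\<Union>Y \<in> \<YY>. ivl_co {} Y - ivl_co X Y, {X}, ivl_oc X {1..n} - \<YY>, \<YY>]) \<longleftrightarrow>
      mono_distinct c [\<Union>Y \<in> \<YY>. ivl_co {} Y - ivl_co X Y, {X}, ivl_oc X {1..n} - \<YY>, \<YY>]"
    by (simp only: mono_distinct_image comp_cpl_cpl)
  have rest: "(\<forall>Z \<in> cpl n ` R. has_color_of (c \<circ> cpl n) Z (cpl n ` G1) \<or> has_color_of (c \<circ> cpl n) Z (cpl n ` G2))
      \<longleftrightarrow> (\<forall>Z \<in> R. has_color_of c Z G1 \<or> has_color_of c Z G2)" for R G1 G2
    by (simp only: ball_simps has_color_of_image comp_cpl_cpl)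
  show ?thesis
    unfolding type41_at_def type42_at_def Let_def families
    by (simp only: conditions mono[unfolded list.map] rest)
qed

lemma type41_cpl_if_type42: "type42 n c \<Longrightarrow> type41 n (c \<circ> cpl n)"
proof -
  assume "type42 n c"
  then obtain Y \<XX> where type42: "type42_at n c Y \<XX>"
    unfolding type42_iff by blast
  then have "Y \<subseteq> {1..n}" "\<XX> \<subseteq> ivl_oo {} Y"
    unfolding type42_at_def by auto
  then have "cpl n ` \<XX> \<subseteq> ivl_oo (cpl n Y) {1..n}"
    using image_mono[of \<XX> "ivl_oo {} Y" "cpl n"] by (simp add: image_cpl_ivl_oo)
  then have "type42_at n (c \<circ> cpl n \<circ> cpl n) (cpl n (cpl n Y)) (cpl n ` cpl n ` \<XX>) \<longleftrightarrow>
      type41_at n (c \<circ> cpl n) (cpl n Y) (cpl n ` \<XX>)"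
    using \<open>Y \<subseteq> {1..n}\<close> by (intro type42_at_cpl_iff) simp_all
  then show "type41 n (c \<circ> cpl n)"
    using type42 unfolding type41_iff by (auto simp: image_image)
qed

lemma type42_cpl_if_type41_at:
  assumes "type41_at n c X \<YY>" "{1..n} \<notin> \<YY>"
  shows "type42 n (c \<circ> cpl n)"
proof -
  have "X \<subseteq> {1..n}" "\<YY> \<subseteq> ivl_oo X {1..n}"
    using assms unfolding type41_at_def ivl_oc_def ivl_oo_def by auto
  then show ?thesis
    using assms(1) type42_at_cpl_iff unfolding type42_iff by blast
qed

lemma type2_zones_exclude_B2:
  assumes B2: "induced_B2 W1 W2 W3 W4"
    and A: "distinct [A1, A2, A3, A4]" "{A1, A2, A3, A4} \<subseteq> {W1, W2, W3, W4}"
    and A1: "\<not> X \<subseteq> A1" and A2: "A2 = X \<or> A2 = Y" and A3: "X \<subset> A3 \<and> A3 \<subset> Y"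
    and A4: "\<not> A4 \<subseteq> Y"
  shows False
proof -
  note le = induced_B2_subset_iff[OF B2]
  have "X \<subseteq> A2" "A2 \<subseteq> Y" "X \<subseteq> A3" "A3 \<subseteq> Y" "A2 \<subseteq> A3 \<or> A3 \<subseteq> A2"
    using A2 A3 by auto
  then have "\<not> A2 \<subseteq> A1" "\<not> A3 \<subseteq> A1" "\<not> A4 \<subseteq> A2" "\<not> A4 \<subseteq> A3"
    using A1 A4 by auto
  then show False
    using le[of A2 A1] le[of A3 A1] le[of A4 A2] le[of A4 A3] le[of A2 A3] le[of A3 A2]
      \<open>A2 \<subseteq> A3 \<or> A3 \<subseteq> A2\<close> A by auto
qed

lemma type31_zones_exclude_B2:
  assumes B2: "induced_B2 W1 W2 W3 W4"
    and A: "distinct [A1, A2, A3, A4]" "{A1, A2, A3, A4} \<subseteq> {W1, W2, W3, W4}"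
    and A1: "\<not> (X \<subseteq> A1 \<and> A1 \<subseteq> Y) \<and> \<not> (X \<subset> A1 \<and> A1 \<inter> (Y - X) \<noteq> {})"
    and A2: "A2 = X \<or> \<not> A2 \<subseteq> Y" and A3: "X \<subset> A3 \<and> A3 \<subset> Y" and A4: "A4 = Y"
  shows False
proof -
  have d: "A1 \<noteq> A2" "A1 \<noteq> A3" "A1 \<noteq> A4" "A2 \<noteq> A3" "A2 \<noteq> A4" "A3 \<noteq> A4"
    using A(1) by auto
  have le: "Ai \<subseteq> Aj \<longleftrightarrow> Ai = Aj \<or> Ai = W1 \<or> Aj = W4"
    if "Ai \<in> {A1, A2, A3, A4}" "Aj \<in> {A1, A2, A3, A4}" for Ai Aj
    by (rule induced_B2_subset_iff[OF B2]) (use that A(2) in blast)+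
  have "A3 \<subseteq> A4"
    using A3 A4 by auto
  show False
  proof (cases "A4 = W4")
    case True
    then have "A1 \<subseteq> A4" "A2 \<subseteq> A4"
      using le by simp_all
    then have "A2 \<subseteq> A3" "\<not> A2 \<subseteq> A1"
      using A1 A2 A3 A4 by auto
    then show False
      using le[of A2 A3] le[of A2 A1] d True by auto
  next
    case False
    then have "A3 = W1"
      using le[of A3 A4] \<open>A3 \<subseteq> A4\<close> d by auto
    then have "A3 \<subseteq> A1" "\<not> A1 \<subseteq> A4"
      using le[of A3 A1] le[of A1 A4] d False by auto
    then show False
      using A1 A3 A4 by blast
  qed
qed

lemma type41_zones_exclude_B2:
  assumes B2: "induced_B2 W1 W2 W3 W4"
    and A: "distinct [A1, A2, A3, A4]" "{A1, A2, A3, A4} \<subseteq> {W1, W2, W3, W4}"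
    and A1: "\<not> X \<subseteq> A1" and A2: "A2 = X"
    and A3: "X \<subset> A3 \<or> (\<not> X \<subseteq> A3 \<and> (\<forall>Y \<in> \<YY>. \<not> A3 \<subset> Y))" and A4: "X \<subset> A4 \<and> A4 \<in> \<YY>"
  shows False
proof -
  have d: "A1 \<noteq> A2" "A1 \<noteq> A3" "A1 \<noteq> A4" "A2 \<noteq> A3" "A2 \<noteq> A4" "A3 \<noteq> A4"
    using A(1) by auto
  have le: "Ai \<subseteq> Aj \<longleftrightarrow> Ai = Aj \<or> Ai = W1 \<or> Aj = W4"
    if "Ai \<in> {A1, A2, A3, A4}" "Aj \<in> {A1, A2, A3, A4}" for Ai Aj
    by (rule induced_B2_subset_iff[OF B2]) (use that A(2) in blast)+
  have "A2 \<noteq> W1"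
    using le[of A2 A1] A1 A2 by auto
  then have "A4 = W4"
    using le[of A2 A4] A2 A4 d by auto
  then have "A3 \<subset> A4"
    using le[of A3 A4] d by auto
  then have "A2 \<subseteq> A3"
    using A2 A3 A4 by auto
  then show False
    using le[of A2 A3] d \<open>A2 \<noteq> W1\<close> \<open>A4 = W4\<close> by auto
qed

lemma not_rainbow_B2_if_type2:
  assumes "type2 n c" shows "\<not> rainbow_B2 n c"
proof -
  obtain X Y where mono: "mono_distinct c
      [ivl_cc {} Y - ivl_cc X Y, {X, Y}, ivl_oo X Y, ivl_cc X {1..n} - ivl_cc X Y]"
    and rest: "\<forall>Z \<in> BL n - (ivl_cc {} Y \<union> ivl_cc X {1..n}).
      has_color_of c Z (ivl_cc {} Y - ivl_cc X Y) \<or> has_color_of c Z (ivl_cc X {1..n} - ivl_cc X Y)"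
    using assms unfolding type2_def Let_def by blast
  show ?thesis
  proof (rule not_rainbow_B2_if_zoned[OF mono, where ?P1.0 = "\<lambda>Z. \<not> X \<subseteq> Z"
        and ?P2.0 = "\<lambda>Z. Z = X \<or> Z = Y" and ?P3.0 = "\<lambda>Z. X \<subset> Z \<and> Z \<subset> Y" and ?P4.0 = "\<lambda>Z. \<not> Z \<subseteq> Y"])
    fix Z assume "Z \<in> BL n"
    then consider "Z \<in> {X, Y}" | "Z \<in> ivl_oo X Y" | "Z \<in> ivl_cc {} Y - ivl_cc X Y"
      | "Z \<in> ivl_cc X {1..n} - ivl_cc X Y" | "Z \<in> BL n - (ivl_cc {} Y \<union> ivl_cc X {1..n})"
      unfolding BL_def ivl_cc_def ivl_oo_def by blast
    then show "has_color_of c Z (ivl_cc {} Y - ivl_cc X Y) \<and> \<not> X \<subseteq> Z \<or>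
        has_color_of c Z {X, Y} \<and> (Z = X \<or> Z = Y) \<or>
        has_color_of c Z (ivl_oo X Y) \<and> X \<subset> Z \<and> Z \<subset> Y \<or>
        has_color_of c Z (ivl_cc X {1..n} - ivl_cc X Y) \<and> \<not> Z \<subseteq> Y"
    proof cases
      case 5
      then have "\<not> X \<subseteq> Z" "\<not> Z \<subseteq> Y"
        unfolding BL_def ivl_cc_def by auto
      with rest 5 show ?thesis
        by blast
    qed (auto simp: ivl_cc_def ivl_oo_def intro: has_color_of_if_mem)
  qed (rule type2_zones_exclude_B2)
qed

lemma not_rainbow_B2_if_type31:
  assumes "type31 n c" shows "\<not> rainbow_B2 n c"
proof -
  obtain X Y where mono: "mono_distinct c
      [ivl_cc {} Y - ivl_cc X Y, {X} \<union> (up_fam n X Y - ivl_oc X Y), ivl_oo X Y, {Y}]"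
    and rest: "\<forall>Z \<in> BL n - (ivl_cc {} Y \<union> up_fam n X Y).
      has_color_of c Z (ivl_cc {} Y - ivl_cc X Y) \<or> has_color_of c Z ({X} \<union> (up_fam n X Y - ivl_oc X Y))"
    using assms unfolding type31_def Let_def by blast
  show ?thesis
  proof (rule not_rainbow_B2_if_zoned[OF mono,
        where ?P1.0 = "\<lambda>Z. \<not> (X \<subseteq> Z \<and> Z \<subseteq> Y) \<and> \<not> (X \<subset> Z \<and> Z \<inter> (Y - X) \<noteq> {})"
        and ?P2.0 = "\<lambda>Z. Z = X \<or> \<not> Z \<subseteq> Y" and ?P3.0 = "\<lambda>Z. X \<subset> Z \<and> Z \<subset> Y"
        and ?P4.0 = "\<lambda>Z. Z = Y"])
    fix Z assume "Z \<in> BL n"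
    then consider "Z = X" | "Z = Y" | "Z \<in> ivl_oo X Y" | "Z \<in> ivl_cc {} Y - ivl_cc X Y"
      | "Z \<in> up_fam n X Y - ivl_oc X Y" | "Z \<in> BL n - (ivl_cc {} Y \<union> up_fam n X Y)"
      unfolding BL_def ivl_cc_def ivl_oo_def ivl_oc_def up_fam_def by blast
    then show "has_color_of c Z (ivl_cc {} Y - ivl_cc X Y) \<and>
          \<not> (X \<subseteq> Z \<and> Z \<subseteq> Y) \<and> \<not> (X \<subset> Z \<and> Z \<inter> (Y - X) \<noteq> {}) \<or>
        has_color_of c Z ({X} \<union> (up_fam n X Y - ivl_oc X Y)) \<and> (Z = X \<or> \<not> Z \<subseteq> Y) \<or>
        has_color_of c Z (ivl_oo X Y) \<and> X \<subset> Z \<and> Z \<subset> Y \<or>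
        has_color_of c Z {Y} \<and> Z = Y"
    proof cases
      case 6
      then have "\<not> Z \<subseteq> Y" "\<not> (X \<subset> Z \<and> Z \<inter> (Y - X) \<noteq> {})"
        unfolding BL_def ivl_cc_def up_fam_def ivl_oc_def by auto
      with rest 6 show ?thesis
        by blast
    qed (auto simp: ivl_cc_def ivl_oo_def ivl_oc_def up_fam_def intro: has_color_of_if_mem)
  qed (rule type31_zones_exclude_B2)
qed

lemma not_rainbow_B2_if_type41:
  assumes "type41 n c" shows "\<not> rainbow_B2 n c"
proof -
  obtain X \<YY> where \<YY>: "\<YY> \<subseteq> ivl_oc X {1..n}"
    and mono: "mono_distinct c
      [\<Union>Y \<in> \<YY>. ivl_co {} Y - ivl_co X Y, {X}, ivl_oc X {1..n} - \<YY>, \<YY>]"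
    and rest: "\<forall>Z \<in> BL n - (ivl_cc X {1..n} \<union> (\<Union>Y \<in> \<YY>. ivl_co {} Y)).
      has_color_of c Z (\<Union>Y \<in> \<YY>. ivl_co {} Y - ivl_co X Y) \<or> has_color_of c Z (ivl_oc X {1..n} - \<YY>)"
    using assms unfolding type41_def Let_def by blast
  show ?thesis
  proof (rule not_rainbow_B2_if_zoned[OF mono, where ?P1.0 = "\<lambda>Z. \<not> X \<subseteq> Z"
        and ?P2.0 = "\<lambda>Z. Z = X" and ?P3.0 = "\<lambda>Z. X \<subset> Z \<or> (\<not> X \<subseteq> Z \<and> (\<forall>Y \<in> \<YY>. \<not> Z \<subset> Y))"
        and ?P4.0 = "\<lambda>Z. X \<subset> Z \<and> Z \<in> \<YY>"])
    fix Z assume "Z \<in> BL n"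
    then consider "Z = X" | "Z \<in> \<YY>" | "Z \<in> ivl_oc X {1..n} - \<YY>"
      | "Z \<in> (\<Union>Y \<in> \<YY>. ivl_co {} Y - ivl_co X Y)"
      | "Z \<in> BL n - (ivl_cc X {1..n} \<union> (\<Union>Y \<in> \<YY>. ivl_co {} Y))"
      unfolding BL_def ivl_cc_def ivl_co_def ivl_oc_def by blast
    then show "has_color_of c Z (\<Union>Y \<in> \<YY>. ivl_co {} Y - ivl_co X Y) \<and> \<not> X \<subseteq> Z \<or>
        has_color_of c Z {X} \<and> Z = X \<or>
        has_color_of c Z (ivl_oc X {1..n} - \<YY>) \<and> (X \<subset> Z \<or> (\<not> X \<subseteq> Z \<and> (\<forall>Y \<in> \<YY>. \<not> Z \<subset> Y))) \<or>
        has_color_of c Z \<YY> \<and> X \<subset> Z \<and> Z \<in> \<YY>"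
    proof cases
      case 4
      then have "\<not> X \<subseteq> Z"
        unfolding ivl_co_def by auto
      with 4 show ?thesis
        by (blast intro: has_color_of_if_mem)
    next
      case 5
      then have "\<not> X \<subseteq> Z" "\<forall>Y \<in> \<YY>. \<not> Z \<subset> Y"
        unfolding BL_def ivl_cc_def ivl_co_def by auto
      with rest 5 show ?thesis
        by blast
    qed (use \<YY> in \<open>auto simp: ivl_oc_def intro: has_color_of_if_mem\<close>)
  qed (rule type41_zones_exclude_B2)
qed

lemma not_rainbow_B2_if_type32: "type32 n c \<Longrightarrow> \<not> rainbow_B2 n c"
  using not_rainbow_B2_if_type31[of n "c \<circ> cpl n"] by (simp add: type32_iff_type31_cpl)

lemma not_rainbow_B2_if_type42: "type42 n c \<Longrightarrow> \<not> rainbow_B2 n c"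
  using not_rainbow_B2_if_type41[of n "c \<circ> cpl n"] type41_cpl_if_type42 by simp

locale rainbow_free =
  fixes n :: nat and c :: "nat set \<Rightarrow> nat" and a b x y :: nat
  assumes no_rainbow: "\<not> rainbow_B2 n c"
    and colour_empty: "c {} = a" and colour_full: "c {1..n} = b"
    and colours: "c ` BL n = {a, b, x, y}"
    and distinct_colours: "distinct [a, b, x, y]"
begin

lemma colours_neq [simp]:
  "a \<noteq> b" "a \<noteq> x" "a \<noteq> y" "b \<noteq> x" "b \<noteq> y" "x \<noteq> y"
  "b \<noteq> a" "x \<noteq> a" "y \<noteq> a" "x \<noteq> b" "y \<noteq> b" "y \<noteq> x"
  using distinct_colours by auto

declare colour_empty [simp] colour_full [simp]

lemma colour_cases: "Z \<subseteq> {1..n} \<Longrightarrow> c Z = a \<or> c Z = b \<or> c Z = x \<or> c Z = y"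
  using colours unfolding BL_def by blast

lemma no_rainbow_copy:
  "induced_B2 W1 W2 W3 W4 \<Longrightarrow> W4 \<subseteq> {1..n} \<Longrightarrow> distinct [c W1, c W2, c W3, c W4] \<Longrightarrow> False"
  using no_rainbow unfolding rainbow_B2_iff by blast

lemma swap_xy: "rainbow_free n c a b y x"
  using no_rainbow colour_empty colour_full colours distinct_colours
  by unfold_locales (auto simp: insert_commute)

lemma dual: "rainbow_free n (c \<circ> cpl n) b a x y"
proof
  show "(c \<circ> cpl n) ` BL n = {b, a, x, y}"
    using colours by (simp only: image_comp[symmetric] image_cpl_BL) (simp add: insert_commute)
qed (use no_rainbow colour_empty colour_full distinct_colours in auto)

lemma x_y_comparable:
  assumes "p \<subseteq> {1..n}" "q \<subseteq> {1..n}" "c p = x" "c q = y"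
  shows "p \<subset> q \<or> q \<subset> p"
proof (rule ccontr)
  assume "\<not> (p \<subset> q \<or> q \<subset> p)"
  moreover have "p \<noteq> q" "p \<noteq> {}" "q \<noteq> {}" "p \<noteq> {1..n}" "q \<noteq> {1..n}"
    using assms colour_empty colour_full colours_neq by metis+
  ultimately have "induced_B2 {} p q {1..n}"
    using assms unfolding induced_B2_def by auto
  then show False
    by (rule no_rainbow_copy) (simp_all add: assms)
qed

lemma below_y_set:
  assumes s: "s \<subseteq> {1..n}" "c s = y" "\<And>W. W \<subset> s \<Longrightarrow> c W \<noteq> y"
    and u: "u \<subset> s" "c u \<noteq> a" "\<And>v. v \<subset> u \<Longrightarrow> c v = a"
    and G: "G \<subset> s" "c G \<noteq> a" "c G \<noteq> c u"
    and Z: "Z \<subset> s"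
  shows "(c Z = c u \<longleftrightarrow> Z = u) \<and> (c Z = c G \<longleftrightarrow> u \<subset> Z)"
proof -
  have below: "c W = a \<or> c W = c u \<or> c W = c G" if "W \<subset> s" for W
  proof -
    have "c W \<noteq> y" "c u \<noteq> y" "c G \<noteq> y"
      using s(3) u(1) G(1) that by auto
    then show ?thesis
      using colour_cases[of W] colour_cases[of u] colour_cases[of G] u(1,2) G(1,2,3) that s(1)
      by (smt (verit) psubset_imp_subset subset_trans)
  qed
  have V: False if "W1 \<subset> W2" "W1 \<subset> W3" "W2 \<subset> s" "W3 \<subset> s" "\<not> W2 \<subseteq> W3" "\<not> W3 \<subseteq> W2"
    "distinct [c W1, c W2, c W3]" for W1 W2 W3
  proof (rule no_rainbow_copy[of W1 W2 W3 s])
    show "induced_B2 W1 W2 W3 s"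
      using that unfolding induced_B2_def by auto
    have "W1 \<subset> s"
      using that by auto
    then show "distinct [c W1, c W2, c W3, c s]"
      using that s(3)[of W1] s(3)[of W2] s(3)[of W3] s(2) by auto
  qed (rule s(1))
  have comparable: "B \<subset> G' \<or> G' \<subset> B" if "B \<subset> s" "G' \<subset> s" "c B = c u" "c G' = c G" for B G'
  proof (rule ccontr)
    assume "\<not> (B \<subset> G' \<or> G' \<subset> B)"
    moreover have "B \<noteq> G'" "B \<noteq> {}" "G' \<noteq> {}"
      using that u(2) G(2,3) by auto
    ultimately show False
      using V[of "{}" B G'] that u(2) G(2,3) by auto
  qed
  have "u \<subset> G"
    using comparable[of u G] u G by auto
  have above_u: "c W = c G" if "u \<subset> W" "W \<subset> s" for W
  proof (rule open_interval_spread[of u G s "\<lambda>W. c W = c G"])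
    fix W W' assume W: "u \<subset> W" "W \<subset> s" "u \<subset> W'" "W' \<subset> s" "\<not> W \<subseteq> W'" "\<not> W' \<subseteq> W" "c W = c G"
    then have "c W' \<noteq> a"
      using V[of u W W'] u(2) G(2,3) by auto
    moreover have "c W' \<noteq> c u"
      using comparable[of W' W] W by auto
    ultimately show "c W' = c G"
      using below[of W'] W by auto
  qed (use \<open>u \<subset> G\<close> G that in auto)
  have outside_u: "c W = a" if "W \<subset> s" "\<not> u \<subseteq> W" for W
  proof (cases "W \<subset> u")
    case True
    then show ?thesis
      using u(3) by blast
  next
    case False
    with that(2) have "\<not> W \<subseteq> u"
      by blast
    then obtain e where e: "e \<in> W" "e \<notin> u"
      by blast
    have "u \<subset> s - {e}"
      using \<open>u \<subset> G\<close> G(1) e that(1) by auto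
    then have "c (s - {e}) = c G"
      using above_u e that(1) by auto
    then have "c W \<noteq> c u"
      using comparable[of W "s - {e}"] e that(1) by auto
    moreover have "c W \<noteq> c G"
      using comparable[of u W] that u(1) \<open>\<not> W \<subseteq> u\<close> by auto
    ultimately show ?thesis
      using below[OF that(1)] by auto
  qed
  show ?thesis
    using above_u[of Z] outside_u[of Z] Z u(1,2) G(2,3) by (cases "u \<subset> Z"; cases "Z = u") auto
qed

lemma sandwich_interior:
  assumes "q1 \<subset> p" "p \<subset> q2" "q2 \<subseteq> {1..n}" "c q1 = y" "c p = x" "c q2 = y"
    and "q1 \<subset> Z" "Z \<subset> q2"
  shows "c Z = x"
proof (rule open_interval_spread[of q1 p q2 "\<lambda>Z. c Z = x"])
  fix W W' assume W: "q1 \<subset> W" "W \<subset> q2" "q1 \<subset> W'" "W' \<subset> q2" "\<not> W \<subseteq> W'" "\<not> W' \<subseteq> W" "c W = x"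
  have "W \<subset> {1..n}" "W' \<subset> {1..n}" "{} \<subset> W" "{} \<subset> W'"
    using W assms(3) by auto
  then have B2: "induced_B2 q1 W W' {1..n}" "induced_B2 {} W W' q2" "induced_B2 {} W W' {1..n}"
    using W unfolding induced_B2_def by auto
  have "c W' \<noteq> a"
    by (rule notI, rule no_rainbow_copy[OF B2(1)]) (simp_all add: assms(4) W(7))
  moreover have "c W' \<noteq> b"
    by (rule notI, rule no_rainbow_copy[OF B2(2)]) (simp_all add: assms(3,6) W(7))
  moreover have "c W' \<noteq> y"
    by (rule notI, rule no_rainbow_copy[OF B2(3)]) (simp_all add: W(7))
  ultimately show "c W' = x"
    using colour_cases[of W'] \<open>W' \<subset> {1..n}\<close> by auto
qed (use assms in auto)

end

locale y_sandwich = rainbow_free +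
  fixes q1 p q2 :: "nat set"
  assumes sandwich: "q1 \<subset> p" "p \<subset> q2" "q2 \<subseteq> {1..n}" "c q1 = y" "c p = x" "c q2 = y"
begin

lemma colour_interior: "q1 \<subset> Z \<Longrightarrow> Z \<subset> q2 \<Longrightarrow> c Z = x"
  using sandwich_interior sandwich by blast

lemma dual_sandwich: "y_sandwich n (c \<circ> cpl n) b a x y (cpl n q2) (cpl n p) (cpl n q1)"
proof -
  interpret dual: rainbow_free n "c \<circ> cpl n" b a x y
    by (rule dual)
  have "q1 \<subseteq> {1..n}" "p \<subseteq> {1..n}"
    using sandwich by auto
  then show ?thesis
    using sandwich by unfold_locales (simp_all add: cpl_psubset_cpl_iff)
qed

lemma y_sets: "Z \<subseteq> {1..n} \<Longrightarrow> c Z = y \<Longrightarrow> Z = q1 \<or> Z = q2"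
proof -
  assume Z: "Z \<subseteq> {1..n}" "c Z = y"
  have "W \<subseteq> Z \<or> Z \<subseteq> W" if "q1 \<subset> W" "W \<subset> q2" for W
  proof -
    have "W \<subseteq> {1..n}"
      using that(2) sandwich(3) by auto
    then have "W \<subset> Z \<or> Z \<subset> W"
      using x_y_comparable Z colour_interior[OF that] by blast
    then show ?thesis
      by auto
  qed
  then have "Z \<subseteq> q1 \<or> q2 \<subseteq> Z"
    by (rule comparable_with_open_interval[OF sandwich(1,2)])
  moreover have "\<not> Z \<subset> q1"
  proof
    assume "Z \<subset> q1"
    have "c q1 = x"
      by (rule sandwich_interior[of Z p q2]) (use sandwich Z \<open>Z \<subset> q1\<close> in auto)
    then show False
      using sandwich(4) by simp
  qed
  moreover have "\<not> q2 \<subset> Z"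
  proof
    assume "q2 \<subset> Z"
    have "c q2 = x"
      by (rule sandwich_interior[of q1 p Z]) (use sandwich Z \<open>q2 \<subset> Z\<close> in auto)
    then show False
      using sandwich(6) by simp
  qed
  ultimately show "Z = q1 \<or> Z = q2"
    by blast
qed

lemma x_set_not_below: "Z \<subseteq> {1..n} \<Longrightarrow> c Z = x \<Longrightarrow> \<not> Z \<subset> q1"
proof
  assume Z: "Z \<subseteq> {1..n}" "c Z = x" "Z \<subset> q1"
  interpret swapped: rainbow_free n c a b y x
    by (rule swap_xy)
  let ?W = "Z \<union> (p - q1)"
  have W: "Z \<subset> ?W" "?W \<subset> p"
    using Z(3) sandwich(1) by auto
  have "c ?W = y"
    by (rule swapped.sandwich_interior[of Z q1 p]) (use sandwich Z W in auto)
  then have "?W = q1 \<or> ?W = q2"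
    using y_sets[of ?W] \<open>?W \<subset> p\<close> sandwich(2,3) by blast
  then show False
    using \<open>?W \<subset> p\<close> sandwich(1,2) by auto
qed

lemma x_sets: "Z \<subseteq> {1..n} \<Longrightarrow> c Z = x \<Longrightarrow> q1 \<subset> Z \<and> Z \<subset> q2"
proof -
  assume Z: "Z \<subseteq> {1..n}" "c Z = x"
  interpret dual: y_sandwich n "c \<circ> cpl n" b a x y "cpl n q2" "cpl n p" "cpl n q1"
    by (rule dual_sandwich)
  have "\<not> q2 \<subset> Z"
    using dual.x_set_not_below[of "cpl n Z"] Z sandwich(3) by (simp add: cpl_psubset_cpl_iff)
  moreover have "\<not> Z \<subset> q1"
    using x_set_not_below Z by blast
  moreover have "Z \<noteq> q1" "Z \<noteq> q2"
    using Z(2) sandwich(4,6) colours_neq(6) by metis+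
  ultimately show ?thesis
    using x_y_comparable[OF Z(1) _ Z(2) sandwich(4)] x_y_comparable[OF Z(1) sandwich(3) Z(2) sandwich(6)]
      sandwich(1,2,3) by auto
qed

lemma colour_outside: "Z \<subseteq> {1..n} \<Longrightarrow> \<not> (q1 \<subseteq> Z \<and> Z \<subseteq> q2) \<Longrightarrow> c Z = a \<or> c Z = b"
  using colour_cases[of Z] y_sets[of Z] x_sets[of Z] sandwich(1,2) by auto

lemma colour_below: "Z \<subseteq> q2 \<Longrightarrow> \<not> q1 \<subseteq> Z \<Longrightarrow> c Z = a"
proof -
  assume Z: "Z \<subseteq> q2" "\<not> q1 \<subseteq> Z"
  obtain d1 d2 where d1: "d1 \<in> p" "d1 \<notin> q1" and d2: "d2 \<in> q2" "d2 \<notin> p"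
    using sandwich(1,2) by blast
  have not_b: "c Z' \<noteq> b" if Z': "Z' \<subseteq> q2" "\<not> q1 \<subseteq> Z'" "\<not> Z' \<subseteq> q1" for Z'
  proof
    assume "c Z' = b"
    obtain d where d: "d \<in> Z'" "d \<notin> q1"
      using Z'(3) by blast
    have "q1 \<subset> q2 - {d}" "q2 - {d} \<subset> q2"
      using d d1 d2 Z'(1) sandwich(1,2) by auto
    then have "c (q2 - {d}) = x"
      by (intro colour_interior)
    have "induced_B2 {} (q2 - {d}) Z' q2"
      using \<open>q1 \<subset> q2 - {d}\<close> d Z' sandwich(1,2) unfolding induced_B2_def by auto
    then show False
      by (rule no_rainbow_copy) (simp_all add: sandwich(3,6) \<open>c Z' = b\<close> \<open>c (q2 - {d}) = x\<close>)
  qed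
  have "c Z = a \<or> c Z = b"
    using colour_outside Z sandwich(3) by auto
  moreover have "c Z \<noteq> b" if "Z \<subseteq> q1"
  proof
    assume "c Z = b"
    let ?Zd = "insert d1 Z" and ?W = "q2 - {d1}"
    have "c ?Zd \<noteq> b"
      using not_b[of ?Zd] Z that d1 sandwich(1,2) by auto
    moreover have "\<not> q1 \<subseteq> ?Zd" "?Zd \<subseteq> {1..n}"
      using Z d1 sandwich(1,2,3) by auto
    ultimately have "c ?Zd = a"
      using colour_outside[of ?Zd] by auto
    moreover have "c ?W = x"
      using d1 d2 sandwich(1,2) by (intro colour_interior) auto
    moreover have "induced_B2 Z ?Zd ?W q2"
      using Z that d1 d2 sandwich(1,2) unfolding induced_B2_def by auto
    ultimately show False
      using no_rainbow_copy[of Z ?Zd ?W q2] sandwich(3,6) \<open>c Z = b\<close> by simp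
  qed
  ultimately show "c Z = a"
    using not_b[of Z] Z by blast
qed

lemma colour_above: "Z \<subseteq> {1..n} \<Longrightarrow> q1 \<subseteq> Z \<Longrightarrow> \<not> Z \<subseteq> q2 \<Longrightarrow> c Z = b"
proof -
  assume Z: "Z \<subseteq> {1..n}" "q1 \<subseteq> Z" "\<not> Z \<subseteq> q2"
  interpret dual: y_sandwich n "c \<circ> cpl n" b a x y "cpl n q2" "cpl n p" "cpl n q1"
    by (rule dual_sandwich)
  have "q1 \<subseteq> {1..n}"
    using sandwich by auto
  then show "c Z = b"
    using dual.colour_below[of "cpl n Z"] Z sandwich(3) by (simp add: cpl_subset_cpl_iff)
qed

lemma type2: "type2 n c"
proof -
  have "finite q2"
    using sandwich(3) finite_subset by blast
  then have "card q1 < card p" "card p < card q2"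
    using sandwich(1,2) by (meson psubset_card_mono finite_subset psubset_imp_subset)+
  moreover have "{} \<subset> q1" "q2 \<subset> {1..n}"
    using sandwich(3,4,6) colour_empty colour_full colours_neq by (metis psubsetI empty_subsetI)+
  moreover have "mono_distinct c [ivl_cc {} q2 - ivl_cc q1 q2, {q1, q2}, ivl_oo q1 q2,
      ivl_cc q1 {1..n} - ivl_cc q1 q2]"
    using colour_below colour_interior colour_above sandwich(4,6)
    by (intro mono_distinct_4I[where ?k1.0 = a and ?k2.0 = y and ?k3.0 = x and ?k4.0 = b])
      (auto simp: ivl_cc_def ivl_oo_def)
  moreover have "has_color_of c Z (ivl_cc {} q2 - ivl_cc q1 q2) \<or>
      has_color_of c Z (ivl_cc q1 {1..n} - ivl_cc q1 q2)"
    if "Z \<in> BL n - (ivl_cc {} q2 \<union> ivl_cc q1 {1..n})" for Z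
  proof -
    have "{} \<in> ivl_cc {} q2 - ivl_cc q1 q2" "{1..n} \<in> ivl_cc q1 {1..n} - ivl_cc q1 q2"
      using calculation(3,4) sandwich(1,2,3) unfolding ivl_cc_def by auto
    moreover have "c Z = c {} \<or> c Z = c {1..n}"
      using colour_outside[of Z] that unfolding BL_def ivl_cc_def by auto
    ultimately show ?thesis
      unfolding has_color_of_def by blast
  qed
  ultimately show ?thesis
    unfolding type2_def Let_def using sandwich(1,2)
    by (intro exI[of _ q1] exI[of _ q2]) auto
qed

end

locale single_y_set = rainbow_free +
  fixes t :: "nat set"
  assumes t: "t \<subseteq> {1..n}" "c t = y"
    and y_set_unique: "\<And>Z. Z \<subseteq> {1..n} \<Longrightarrow> c Z = y \<Longrightarrow> Z = t"
    and x_sets_below_t: "\<And>Z. Z \<subseteq> {1..n} \<Longrightarrow> c Z = x \<Longrightarrow> Z \<subset> t"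
begin

lemma t_psubset: "t \<subset> {1..n}"
  using t colour_full colours_neq(5) by (metis psubsetI)

lemma outside_t: "Z \<subseteq> {1..n} \<Longrightarrow> \<not> Z \<subseteq> t \<Longrightarrow> c Z = a \<or> c Z = b"
  using colour_cases[of Z] y_set_unique[of Z] x_sets_below_t[of Z] by auto

lemma below_t: "Z \<subset> t \<Longrightarrow> c Z = a \<or> c Z = b \<or> c Z = x"
  using colour_cases[of Z] y_set_unique[of Z] t(1) by auto

lemma above_x_set_outside_t:
  assumes p: "p \<subseteq> {1..n}" "c p = x" and Z: "p \<subset> Z" "Z \<subseteq> {1..n}" "\<not> Z \<subseteq> t"
  shows "c Z = b"
proof (rule ccontr)
  assume "c Z \<noteq> b"
  then have "c Z = a" "Z \<subset> {1..n}"
    using outside_t Z colour_full by (auto simp: psubset_eq)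
  have "p \<subset> t"
    using x_sets_below_t p by blast
  show False
  proof (cases "t \<subseteq> Z")
    case False
    then have "induced_B2 p t Z {1..n}"
      using \<open>p \<subset> t\<close> Z \<open>Z \<subset> {1..n}\<close> t_psubset unfolding induced_B2_def by auto
    then show False
      by (rule no_rainbow_copy) (simp_all add: p t \<open>c Z = a\<close>)
  next
    case True
    let ?T = "p \<union> (Z - t)"
    have T: "p \<subset> ?T" "\<not> t \<subseteq> ?T" "\<not> ?T \<subseteq> t" "?T \<subset> Z" "?T \<subseteq> {1..n}"
      using \<open>p \<subset> t\<close> Z True by auto
    then consider "c ?T = a" | "c ?T = b"
      using outside_t by blast
    then show False
    proof cases
      case 1
      then have "induced_B2 p t ?T {1..n}"
        using T \<open>p \<subset> t\<close> t_psubset colour_full unfolding induced_B2_def by (auto simp: psubset_eq)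
      then show False
        by (rule no_rainbow_copy) (simp_all add: p t 1)
    next
      case 2
      have "induced_B2 p t ?T Z"
        using T \<open>p \<subset> t\<close> True Z unfolding induced_B2_def by auto
      then show False
        by (rule no_rainbow_copy) (simp_all add: p t 2 Z \<open>c Z = a\<close>)
    qed
  qed
qed

lemma type42_if_no_b_below_t:
  assumes no_b: "\<And>Z. Z \<subset> t \<Longrightarrow> c Z \<noteq> b" and p0: "p0 \<subseteq> {1..n}" "c p0 = x"
  shows "type42_at n c t {Z. Z \<subseteq> {1..n} \<and> c Z = x}"
proof -
  let ?X = "{Z. Z \<subseteq> {1..n} \<and> c Z = x}"
  have x_set: "Z \<subset> t" "Z \<noteq> {}" if "Z \<in> ?X" for Z
    using that x_sets_below_t colours_neq(2) by (auto simp del: colours_neq)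
  have "p0 \<subset> t" "p0 \<noteq> {}"
    using x_set p0 by auto
  have "finite t"
    using t(1) finite_subset by blast
  then have "card p0 < card t" "card t < n" "0 < card p0"
    using psubset_card_mono[OF \<open>finite t\<close> \<open>p0 \<subset> t\<close>] psubset_card_mono[OF _ t_psubset]
      \<open>p0 \<noteq> {}\<close> finite_subset[of p0 t] \<open>p0 \<subset> t\<close> by (auto simp: card_gt_0_iff)
  then have "2 \<le> card t" "card t + 1 \<le> n"
    by linarith+
  moreover have "?X \<noteq> {}"
    using p0 by blast
  moreover have "?X \<subseteq> ivl_oo {} t"
    using x_set unfolding ivl_oo_def by blast
  moreover have "mono_distinct c [\<Union>X \<in> ?X. ivl_oc X {1..n} - ivl_oc X t, {t}, ivl_co {} t - ?X, ?X]"
  proof (rule mono_distinct_4I[where ?k1.0 = b and ?k2.0 = y and ?k3.0 = a and ?k4.0 = x])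
    show "\<forall>Z \<in> \<Union>X \<in> ?X. ivl_oc X {1..n} - ivl_oc X t. c Z = b"
    proof
      fix Z assume "Z \<in> (\<Union>X \<in> ?X. ivl_oc X {1..n} - ivl_oc X t)"
      then obtain X where "X \<in> ?X" "X \<subset> Z" "Z \<subseteq> {1..n}" "\<not> Z \<subseteq> t"
        unfolding ivl_oc_def by blast
      then show "c Z = b"
        using above_x_set_outside_t[of X Z] by blast
    qed
    show "\<forall>Z \<in> ivl_co {} t - ?X. c Z = a"
    proof
      fix Z assume "Z \<in> ivl_co {} t - ?X"
      then have "Z \<subset> t" "c Z \<noteq> x"
        using t(1) unfolding ivl_co_def by auto
      then show "c Z = a"
        using below_t no_b by blast
    qed
  qed (simp_all add: t)
  moreover have "has_color_of c Z (\<Union>X \<in> ?X. ivl_oc X {1..n} - ivl_oc X t) \<or>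
      has_color_of c Z (ivl_co {} t - ?X)"
    if "Z \<in> BL n - (ivl_cc {} t \<union> (\<Union>X \<in> ?X. ivl_oc X {1..n}))" for Z
  proof -
    have "{1..n} \<in> (\<Union>X \<in> ?X. ivl_oc X {1..n} - ivl_oc X t)"
      using p0 \<open>p0 \<subset> t\<close> t_psubset unfolding ivl_oc_def by auto
    moreover have "{} \<in> ivl_co {} t - ?X"
      using \<open>p0 \<subset> t\<close> x_set unfolding ivl_co_def by blast
    moreover have "c Z = c {} \<or> c Z = c {1..n}"
      using outside_t[of Z] that unfolding BL_def ivl_cc_def by simp
    ultimately show ?thesis
      unfolding has_color_of_def by blast
  qed
  ultimately show ?thesis
    unfolding type42_at_def Let_def using t(1) by blast
qed

lemma type31_if_minimal_b:
  assumes u: "u \<subset> t" "c u = b"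
    and below_t_structure: "\<And>Z. Z \<subset> t \<Longrightarrow> (c Z = b \<longleftrightarrow> Z = u) \<and> (c Z = x \<longleftrightarrow> u \<subset> Z)"
    and p0: "p0 \<subseteq> {1..n}" "c p0 = x"
  shows "type31 n c"
proof -
  have "p0 \<subset> t"
    using x_sets_below_t p0 by blast
  then have "u \<subset> p0"
    using below_t_structure p0(2) by blast
  have "{} \<subset> u"
    using u(2) colour_empty colours_neq(1) by (metis psubsetI empty_subsetI)
  have "finite t"
    using t(1) finite_subset by blast
  then have "card u + 2 \<le> card t"
    using psubset_card_mono[OF _ \<open>u \<subset> p0\<close>] psubset_card_mono[OF \<open>finite t\<close> \<open>p0 \<subset> t\<close>]
      finite_subset[of p0 t] \<open>p0 \<subset> t\<close> by auto
  moreover have "mono_distinct c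
      [ivl_cc {} t - ivl_cc u t, {u} \<union> (up_fam n u t - ivl_oc u t), ivl_oo u t, {t}]"
  proof (rule mono_distinct_4I[where ?k1.0 = a and ?k2.0 = b and ?k3.0 = x and ?k4.0 = y])
    show "\<forall>Z \<in> ivl_cc {} t - ivl_cc u t. c Z = a"
    proof
      fix Z assume "Z \<in> ivl_cc {} t - ivl_cc u t"
      then have "Z \<subset> t" "Z \<noteq> u" "\<not> u \<subset> Z"
        using u(1) unfolding ivl_cc_def by auto
      then show "c Z = a"
        using below_t below_t_structure by blast
    qed
    show "\<forall>Z \<in> {u} \<union> (up_fam n u t - ivl_oc u t). c Z = b"
    proof
      fix Z assume "Z \<in> {u} \<union> (up_fam n u t - ivl_oc u t)"
      then consider "Z = u" | e where "e \<in> Z" "e \<in> t" "e \<notin> u" "u \<subset> Z" "Z \<subseteq> {1..n}" "\<not> Z \<subseteq> t"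
        unfolding up_fam_def ivl_oc_def by auto
      then show "c Z = b"
      proof cases
        case (2 e)
        have "u \<subset> insert e u" "insert e u \<subset> t"
          using 2 \<open>u \<subset> p0\<close> \<open>p0 \<subset> t\<close> by auto
        then have "c (insert e u) = x"
          using below_t_structure by blast
        moreover have "insert e u \<subset> Z" "insert e u \<subseteq> {1..n}"
          using 2 \<open>insert e u \<subset> t\<close> t(1) by auto
        ultimately show "c Z = b"
          using above_x_set_outside_t 2 by blast
      qed (use u in simp)
    qed
  qed (use below_t_structure t in \<open>auto simp: ivl_oo_def\<close>)
  moreover have "has_color_of c Z (ivl_cc {} t - ivl_cc u t) \<or>
      has_color_of c Z ({u} \<union> (up_fam n u t - ivl_oc u t))"
    if "Z \<in> BL n - (ivl_cc {} t \<union> up_fam n u t)" for Z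
  proof -
    have "{} \<in> ivl_cc {} t - ivl_cc u t" "u \<in> {u} \<union> (up_fam n u t - ivl_oc u t)"
      using \<open>{} \<subset> u\<close> unfolding ivl_cc_def by auto
    moreover have "c Z = c {} \<or> c Z = c u"
      using outside_t[of Z] that u(2) unfolding BL_def ivl_cc_def by auto
    ultimately show ?thesis
      unfolding has_color_of_def by blast
  qed
  ultimately show ?thesis
    unfolding type31_def Let_def using \<open>{} \<subset> u\<close> u(1) t_psubset
    by (intro exI[of _ u] exI[of _ t]) auto
qed

lemma type41_if_minimal_x:
  assumes u: "u \<subset> t" "c u = x"
    and below_t_structure: "\<And>Z. Z \<subset> t \<Longrightarrow> (c Z = x \<longleftrightarrow> Z = u) \<and> (c Z = b \<longleftrightarrow> u \<subset> Z)"
    and B: "B \<subset> t" "c B = b"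
  shows "type41_at n c u {t}"
proof -
  have "u \<subset> B"
    using below_t_structure B by blast
  have "u \<noteq> {}"
    using u(2) colour_empty colours_neq(2) by metis
  have "u \<subseteq> {1..n}"
    using u(1) t(1) by auto
  have "finite t"
    using t(1) finite_subset by blast
  then have "0 < card u" "card u < card B" "card B < card t" "card t < n"
    using psubset_card_mono[OF _ \<open>u \<subset> B\<close>] psubset_card_mono[OF \<open>finite t\<close> B(1)]
      psubset_card_mono[OF _ t_psubset] finite_subset[of u t] finite_subset[of B t] B(1) u(1)
      \<open>u \<noteq> {}\<close> by (auto simp: card_gt_0_iff)
  then have "1 \<le> card u" "card u + 2 \<le> n"
    by linarith+
  moreover have "{t} \<subseteq> ivl_oc u {1..n}"
    using u(1) t(1) unfolding ivl_oc_def by auto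
  moreover have "mono_distinct c
      [\<Union>Y \<in> {t}. ivl_co {} Y - ivl_co u Y, {u}, ivl_oc u {1..n} - {t}, {t}]"
  proof (rule mono_distinct_4I[where ?k1.0 = a and ?k2.0 = x and ?k3.0 = b and ?k4.0 = y])
    show "\<forall>Z \<in> \<Union>Y \<in> {t}. ivl_co {} Y - ivl_co u Y. c Z = a"
    proof
      fix Z assume "Z \<in> (\<Union>Y \<in> {t}. ivl_co {} Y - ivl_co u Y)"
      then have "Z \<subset> t" "Z \<noteq> u" "\<not> u \<subset> Z"
        unfolding ivl_co_def by auto
      then show "c Z = a"
        using below_t below_t_structure by blast
    qed
    show "\<forall>Z \<in> ivl_oc u {1..n} - {t}. c Z = b"
    proof
      fix Z assume "Z \<in> ivl_oc u {1..n} - {t}"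
      then have Z: "u \<subset> Z" "Z \<subseteq> {1..n}" "Z \<noteq> t"
        unfolding ivl_oc_def by auto
      show "c Z = b"
      proof (cases "Z \<subseteq> t")
        case True
        then show ?thesis
          using below_t_structure[of Z] Z by blast
      next
        case False
        then show ?thesis
          using above_x_set_outside_t[OF \<open>u \<subseteq> {1..n}\<close> u(2) Z(1,2)] by blast
      qed
    qed
  qed (simp_all add: u t)
  moreover have "has_color_of c Z (\<Union>Y \<in> {t}. ivl_co {} Y - ivl_co u Y) \<or>
      has_color_of c Z (ivl_oc u {1..n} - {t})"
    if "Z \<in> BL n - (ivl_cc u {1..n} \<union> (\<Union>Y \<in> {t}. ivl_co {} Y))" for Z
  proof -
    have "{} \<in> (\<Union>Y \<in> {t}. ivl_co {} Y - ivl_co u Y)" "{1..n} \<in> ivl_oc u {1..n} - {t}"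
      using \<open>u \<noteq> {}\<close> u(1) t_psubset \<open>u \<subseteq> {1..n}\<close> unfolding ivl_co_def ivl_oc_def by auto
    moreover have "\<not> Z \<subseteq> t" "Z \<subseteq> {1..n}"
      using that u(1) unfolding BL_def ivl_cc_def ivl_co_def by auto
    then have "c Z = c {} \<or> c Z = c {1..n}"
      using outside_t by simp
    ultimately show ?thesis
      unfolding has_color_of_def by blast
  qed
  ultimately show ?thesis
    unfolding type41_at_def Let_def using \<open>u \<subseteq> {1..n}\<close> by blast
qed

lemma type42_or_type31_or_type41:
  assumes p0: "p0 \<subseteq> {1..n}" "c p0 = x"
  shows "type42 n c \<or> type31 n c \<or> (\<exists>X \<YY>. {1..n} \<notin> \<YY> \<and> type41_at n c X \<YY>)"
proof (cases "\<exists>B. B \<subset> t \<and> c B = b")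
  case False
  then have "type42_at n c t {Z. Z \<subseteq> {1..n} \<and> c Z = x}"
    using p0 by (intro type42_if_no_b_below_t) auto
  then show ?thesis
    unfolding type42_iff by blast
next
  case True
  then obtain B where B: "B \<subset> t" "c B = b"
    by blast
  let ?F = "{Z. Z \<subset> t \<and> c Z \<noteq> a}"
  have "finite t"
    using t(1) finite_subset by blast
  have "finite ?F"
    by (rule finite_subset[of _ "Pow t"]) (use \<open>finite t\<close> in auto)
  moreover have "B \<in> ?F"
    using B by simp
  ultimately obtain u where "u \<in> ?F" and u_min: "\<forall>v \<in> ?F. \<not> v \<subset> u"
    using ex_psubset_minimal[of ?F B] by blast
  then have u: "u \<subset> t" "c u \<noteq> a"
    by simp_all
  have u_min: "c v = a" if "v \<subset> u" for v
    using u_min that u(1) by auto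
  have no_y: "c W \<noteq> y" if "W \<subset> t" for W
    using y_set_unique[of W] that t(1) by auto
  consider "c u = b" | "c u = x"
    using below_t[OF u(1)] u(2) by blast
  then show ?thesis
  proof cases
    case 1
    have "p0 \<subset> t" "c p0 \<noteq> a" "c p0 \<noteq> c u"
      using x_sets_below_t p0 1 by simp_all
    then have "(c Z = b \<longleftrightarrow> Z = u) \<and> (c Z = x \<longleftrightarrow> u \<subset> Z)" if "Z \<subset> t" for Z
      using below_y_set[OF t no_y u u_min \<open>p0 \<subset> t\<close> _ _ that] p0(2) 1 by simp
    then show ?thesis
      using type31_if_minimal_b[OF u(1) 1 _ p0] by blast
  next
    case 2
    have "c B \<noteq> a" "c B \<noteq> c u"
      using B(2) 2 by simp_all
    then have "(c Z = x \<longleftrightarrow> Z = u) \<and> (c Z = b \<longleftrightarrow> u \<subset> Z)" if "Z \<subset> t" for Z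
      using below_y_set[OF t no_y u u_min B(1) _ _ that] B(2) 2 by simp
    then have "type41_at n c u {t}"
      using type41_if_minimal_x[OF u(1) 2 _ B] by blast
    moreover have "{1..n} \<notin> {t}"
      using t_psubset by blast
    ultimately show ?thesis
      by blast
  qed
qed

end

context rainbow_free
begin

lemma y_set_with_two_x_facets_maximal:
  assumes q: "q \<subset> q'" "q' \<subseteq> {1..n}" "c q = y" "c q' = y"
    and facets: "e \<in> q" "g \<in> q" "e \<noteq> g" "c (q - {e}) = x" "c (q - {g}) = x"
  shows False
proof -
  obtain h where h: "h \<in> q'" "h \<notin> q"
    using q(1) by blast
  let ?Z = "q' - {g}"
  have "?Z \<subseteq> {1..n}" "q - {e} \<subseteq> {1..n}" "q \<subseteq> {1..n}"
    using q(1,2) by auto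
  have "c ?Z \<noteq> y"
  proof
    assume "c ?Z = y"
    then have "q - {e} \<subset> ?Z \<or> ?Z \<subset> q - {e}"
      using x_y_comparable \<open>?Z \<subseteq> {1..n}\<close> \<open>q - {e} \<subseteq> {1..n}\<close> facets(4) by blast
    then show False
      using facets h by auto
  qed
  moreover have "c ?Z \<noteq> x"
  proof
    assume "c ?Z = x"
    then have "?Z \<subset> q \<or> q \<subset> ?Z"
      using x_y_comparable \<open>?Z \<subseteq> {1..n}\<close> \<open>q \<subseteq> {1..n}\<close> q(3) by blast
    then show False
      using facets h by auto
  qed
  moreover have "c ?Z \<noteq> b"
  proof
    assume "c ?Z = b"
    have "induced_B2 {} (q - {e}) ?Z q'"
      using q(1) facets h unfolding induced_B2_def by auto
    then show False
      by (rule no_rainbow_copy) (simp_all add: q(2,4) facets(4) \<open>c ?Z = b\<close>)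
  qed
  moreover have "c ?Z \<noteq> a"
  proof
    assume "c ?Z = a"
    have "?Z \<noteq> {1..n}" "q \<noteq> {1..n}"
      using \<open>c ?Z = a\<close> q(3) colour_full colours_neq(1,5) by metis+
    then have "induced_B2 (q - {g}) q ?Z {1..n}"
      using q(1,2) facets h unfolding induced_B2_def by auto
    then show False
      by (rule no_rainbow_copy) (simp_all add: q(3) facets(5) \<open>c ?Z = a\<close>)
  qed
  ultimately show False
    using colour_cases[OF \<open>?Z \<subseteq> {1..n}\<close>] by blast
qed

end

locale x_below_y = rainbow_free +
  assumes x_below_y: "\<And>p q. p \<subseteq> {1..n} \<Longrightarrow> q \<subseteq> {1..n} \<Longrightarrow> c p = x \<Longrightarrow> c q = y \<Longrightarrow> p \<subset> q"
begin

lemma dual_swapped: "x_below_y n (c \<circ> cpl n) b a y x"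
proof -
  interpret dual: rainbow_free n "c \<circ> cpl n" b a x y
    by (rule dual)
  interpret dual_swapped: rainbow_free n "c \<circ> cpl n" b a y x
    by (rule dual.swap_xy)
  show ?thesis
  proof
    fix P Q assume "P \<subseteq> {1..n}" "Q \<subseteq> {1..n}" "(c \<circ> cpl n) P = y" "(c \<circ> cpl n) Q = x"
    then show "P \<subset> Q"
      using x_below_y[of "cpl n Q" "cpl n P"] by (simp add: cpl_psubset_cpl_iff)
  qed
qed

lemma false_if_b_below_minimal_y:
  assumes p: "p1 \<subseteq> {1..n}" "c p1 = x" "p2 \<subseteq> {1..n}" "c p2 = x" "p1 \<noteq> p2"
    and q: "q \<subseteq> {1..n}" "c q = y" "\<And>Z. Z \<subset> q \<Longrightarrow> c Z \<noteq> y"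
    and q': "q' \<subseteq> {1..n}" "c q' = y" "q' \<noteq> q"
    and B: "B \<subset> q" "c B = b"
  shows False
proof -
  let ?F = "{Z. Z \<subset> q \<and> c Z \<noteq> a}"
  have "finite q"
    using q(1) finite_subset by blast
  have "finite ?F"
    by (rule finite_subset[of _ "Pow q"]) (use \<open>finite q\<close> in auto)
  moreover have "B \<in> ?F"
    using B by simp
  ultimately obtain u where "u \<in> ?F" and u_min: "\<forall>v \<in> ?F. \<not> v \<subset> u"
    using ex_psubset_minimal[of ?F B] by blast
  then have u: "u \<subset> q" "c u \<noteq> a"
    by simp_all
  have u_min: "c v = a" if "v \<subset> u" for v
    using u_min that u(1) by auto
  have "p1 \<subset> q" "p2 \<subset> q"
    using x_below_y p q by blast+
  have "c u \<noteq> y"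
    using q(3) u(1) by blast
  then consider "c u = b" | "c u = x"
    using colour_cases[of u] u q(1) by auto
  then show False
  proof cases
    case 1
    have "c p1 \<noteq> a" "c p1 \<noteq> c u"
      using p(2) 1 by simp_all
    then have below_q: "(c Z = b \<longleftrightarrow> Z = u) \<and> (c Z = x \<longleftrightarrow> u \<subset> Z)" if "Z \<subset> q" for Z
      using below_y_set[OF q u u_min \<open>p1 \<subset> q\<close> _ _ that] p(2) 1 by simp
    then have "u \<subset> p1"
      using \<open>p1 \<subset> q\<close> p(2) by blast
    then obtain e g where e: "e \<in> p1" "e \<notin> u" and g: "g \<in> q" "g \<notin> p1"
      using \<open>p1 \<subset> q\<close> by blast
    have "u \<subset> q - {e}" "q - {e} \<subset> q" "u \<subset> q - {g}" "q - {g} \<subset> q"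
      using e g \<open>u \<subset> p1\<close> \<open>p1 \<subset> q\<close> by auto
    then have "c (q - {e}) = x" "c (q - {g}) = x"
      using below_q[of "q - {e}"] below_q[of "q - {g}"] by simp_all
    moreover have "q - {e} \<subseteq> {1..n}" "q - {g} \<subseteq> {1..n}"
      using q(1) by auto
    ultimately have "q - {e} \<subset> q'" "q - {g} \<subset> q'"
      using x_below_y[OF _ q'(1) _ q'(2)] by blast+
    then have "q \<subset> q'"
      using e g q'(3) by blast
    then show False
      using y_set_with_two_x_facets_maximal q'(1,2) q(2) e g \<open>p1 \<subset> q\<close>
        \<open>c (q - {e}) = x\<close> \<open>c (q - {g}) = x\<close> by blast
  next
    case 2
    have "c B \<noteq> a" "c B \<noteq> c u"
      using B(2) 2 by simp_all
    then have "c Z = x \<longleftrightarrow> Z = u" if "Z \<subset> q" for Z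
      using below_y_set[OF q u u_min B(1) _ _ that] 2 by simp
    then show False
      using \<open>p1 \<subset> q\<close> \<open>p2 \<subset> q\<close> p by blast
  qed
qed

end

locale x_y_gap = x_below_y +
  fixes p q :: "nat set"
  assumes p: "p \<subseteq> {1..n}" "c p = x" and p_max: "\<And>Z. Z \<subseteq> {1..n} \<Longrightarrow> c Z = x \<Longrightarrow> \<not> p \<subset> Z"
    and q: "q \<subseteq> {1..n}" "c q = y" and q_min: "\<And>Z. Z \<subset> q \<Longrightarrow> c Z \<noteq> y"
    and no_a_above_p: "\<And>Z. p \<subset> Z \<Longrightarrow> Z \<subseteq> {1..n} \<Longrightarrow> c Z \<noteq> a"
    and no_b_below_q: "\<And>Z. Z \<subset> q \<Longrightarrow> c Z \<noteq> b"
begin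

lemma q_covers_p: obtains e where "e \<notin> p" "q = insert e p"
proof -
  have "p \<subset> q"
    using x_below_y p q by blast
  then obtain e where e: "e \<in> q" "e \<notin> p"
    by blast
  have "q = insert e p"
  proof (rule ccontr)
    assume "q \<noteq> insert e p"
    then have Z: "p \<subset> insert e p" "insert e p \<subset> q" "insert e p \<subseteq> {1..n}"
      using e \<open>p \<subset> q\<close> q(1) by auto
    then have "c (insert e p) \<noteq> a" "c (insert e p) \<noteq> b" "c (insert e p) \<noteq> x" "c (insert e p) \<noteq> y"
      using no_a_above_p no_b_below_q p_max q_min by blast+
    then show False
      using colour_cases[OF Z(3)] by blast
  qed
  then show thesis
    using that e(2) by blast
qed

lemma x_sets_below_p: 
  assumes p'': "p'' \<subseteq> {1..n}" "c p'' = x" and q'': "q'' \<subseteq> {1..n}" "c q'' = y" "q'' \<noteq> q"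
  shows "p'' \<subseteq> p"
proof (rule ccontr)
  assume "\<not> p'' \<subseteq> p"
  obtain e where e: "e \<notin> p" "q = insert e p"
    using q_covers_p by blast
  have "p'' \<subset> q" "p \<subset> q''" "p'' \<subset> q''"
    using x_below_y p p'' q q'' by blast+
  then have "e \<in> p''"
    using \<open>\<not> p'' \<subseteq> p\<close> e by blast
  have "\<not> q'' \<subseteq> q"
    using \<open>p \<subset> q''\<close> q''(3) e by blast
  then obtain f where f: "f \<in> q''" "f \<notin> q"
    by blast
  let ?Z = "insert f p"
  have Z: "p \<subset> ?Z" "?Z \<subseteq> q''" "?Z \<subseteq> {1..n}"
    using f e \<open>p \<subset> q''\<close> q''(1) by auto
  have "c ?Z \<noteq> y"
  proof
    assume "c ?Z = y"
    then have "p'' \<subset> ?Z"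
      using x_below_y p'' Z(3) by blast
    then show False
      using \<open>e \<in> p''\<close> e f by auto
  qed
  then have "c ?Z = b"
    using colour_cases[OF Z(3)] no_a_above_p[OF Z(1,3)] p_max[OF Z(3)] Z(1) by blast
  moreover have "?Z \<noteq> q''"
    using \<open>c ?Z = b\<close> q''(2) colours_neq(5) by metis
  then have "induced_B2 {} p'' ?Z q''"
    using Z \<open>e \<in> p''\<close> \<open>p'' \<subset> q\<close> \<open>p'' \<subset> q''\<close> e f unfolding induced_B2_def by auto
  ultimately show False
    using no_rainbow_copy[of "{}" p'' ?Z q''] p''(2) q'' by simp
qed

lemma y_sets_above_q:
  assumes q'': "q'' \<subseteq> {1..n}" "c q'' = y" and p'': "p'' \<subseteq> {1..n}" "c p'' = x" "p'' \<subset> p"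
  shows "q \<subseteq> q''"
proof (rule ccontr)
  assume "\<not> q \<subseteq> q''"
  obtain e where e: "e \<notin> p" "q = insert e p"
    using q_covers_p by blast
  have "p \<subset> q''" "p'' \<subset> q''"
    using x_below_y p p'' q'' by blast+
  then have "e \<notin> q''"
    using \<open>\<not> q \<subseteq> q''\<close> e by blast
  obtain f where f: "f \<in> p" "f \<notin> p''"
    using p''(3) by blast
  let ?Z = "q - {f}"
  have Z: "?Z \<subset> q" "p'' \<subset> ?Z" "?Z \<subseteq> {1..n}"
    using f e p''(3) q(1) by auto
  have "c ?Z \<noteq> x"
  proof
    assume "c ?Z = x"
    then have "?Z \<subset> q''"
      using x_below_y q'' Z(3) by blast
    then show False
      using \<open>e \<notin> q''\<close> e f by auto
  qed
  then have "c ?Z = a"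
    using colour_cases[OF Z(3)] no_b_below_q[OF Z(1)] q_min[OF Z(1)] by blast
  moreover have "q'' \<noteq> {1..n}"
    using q''(2) colours_neq(5) colour_full by metis
  then have "?Z \<subset> {1..n}" "q'' \<subset> {1..n}" "\<not> ?Z \<subseteq> q''" "\<not> q'' \<subseteq> ?Z"
    using q(1) q''(1) \<open>p \<subset> q''\<close> \<open>e \<notin> q''\<close> e f by auto
  then have "induced_B2 p'' ?Z q'' {1..n}"
    using Z(2) \<open>p'' \<subset> q''\<close> unfolding induced_B2_def by blast
  ultimately show False
    using no_rainbow_copy[of p'' ?Z q'' "{1..n}"] p''(2) q''(2) by simp
qed

lemma false_if_other_x_and_y_sets:
  assumes p': "p' \<subseteq> {1..n}" "c p' = x" "p' \<noteq> p" and q': "q' \<subseteq> {1..n}" "c q' = y" "q' \<noteq> q"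
  shows False
proof -
  obtain e where e: "e \<notin> p" "q = insert e p"
    using q_covers_p by blast
  have "p' \<subset> p"
    using x_sets_below_p[OF p'(1,2) q'] p'(3) by blast
  then have "q \<subset> q'"
    using y_sets_above_q[OF q'(1,2) p'(1,2)] q'(3) by blast
  obtain f g where f: "f \<in> p" "f \<notin> p'" and g: "g \<in> q'" "g \<notin> q"
    using \<open>p' \<subset> p\<close> \<open>q \<subset> q'\<close> by blast
  let ?Z1 = "insert e p'" and ?Z2 = "insert g p"
  have Z1: "?Z1 \<subset> q" "?Z1 \<subseteq> {1..n}" "\<not> ?Z1 \<subseteq> p"
    using e f \<open>p' \<subset> p\<close> q(1) by auto
  have Z2: "p \<subset> ?Z2" "?Z2 \<subseteq> {1..n}" "\<not> q \<subseteq> ?Z2"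
    using e g \<open>q \<subset> q'\<close> q'(1) by auto
  have "c ?Z1 \<noteq> x"
    using x_sets_below_p[OF Z1(2) _ q'] Z1(3) by blast
  then have "c ?Z1 = a"
    using colour_cases[OF Z1(2)] no_b_below_q[OF Z1(1)] q_min[OF Z1(1)] by blast
  have "c ?Z2 \<noteq> y"
    using y_sets_above_q[OF Z2(2) _ p'(1,2) \<open>p' \<subset> p\<close>] Z2(3) by blast
  then have "c ?Z2 = b"
    using colour_cases[OF Z2(2)] no_a_above_p[OF Z2(1,2)] p_max[OF Z2(2)] Z2(1) by blast
  moreover have "?Z2 \<noteq> q'"
    using \<open>c ?Z2 = b\<close> q'(2) colours_neq(5) by metis
  then have "induced_B2 p' ?Z1 ?Z2 q'"
    using Z1 Z2 \<open>p' \<subset> p\<close> \<open>q \<subset> q'\<close> e f g unfolding induced_B2_def by auto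
  ultimately show False
    using no_rainbow_copy[of p' ?Z1 ?Z2 q'] \<open>c ?Z1 = a\<close> p'(2) q' by simp
qed

end

context x_below_y
begin

lemma false_if_a_above_maximal_x:
  assumes p: "p \<subseteq> {1..n}" "c p = x" "\<And>Z. Z \<subseteq> {1..n} \<Longrightarrow> c Z = x \<Longrightarrow> \<not> p \<subset> Z"
    and p': "p' \<subseteq> {1..n}" "c p' = x" "p' \<noteq> p"
    and q: "q1 \<subseteq> {1..n}" "c q1 = y" "q2 \<subseteq> {1..n}" "c q2 = y" "q1 \<noteq> q2"
    and A: "p \<subset> A" "A \<subseteq> {1..n}" "c A = a"
  shows False
proof -
  interpret dual: x_below_y n "c \<circ> cpl n" b a y x
    by (rule dual_swapped)
  have minimal: "(c \<circ> cpl n) Z \<noteq> x" if "Z \<subset> cpl n p" for Z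
  proof -
    have "cpl n p \<subseteq> {1..n}"
      using p(1) by simp
    then have "Z \<subseteq> {1..n}"
      using that by (meson order_trans psubset_imp_subset)
    then have "p \<subset> cpl n Z"
      using that p(1) cpl_psubset_cpl_iff[of "cpl n p" n Z] by simp
    then show ?thesis
      using p(3)[of "cpl n Z"] \<open>Z \<subseteq> {1..n}\<close> by (simp, blast)
  qed
  have "cpl n A \<subset> cpl n p"
    using A p(1) by (simp add: cpl_psubset_cpl_iff)
  then show False
    using dual.false_if_b_below_minimal_y[of "cpl n q1" "cpl n q2" "cpl n p" "cpl n p'" "cpl n A"]
      p p' q A minimal by simp
qed

lemma false_if_two_x_sets_two_y_sets:
  assumes x_sets: "p1 \<subseteq> {1..n}" "c p1 = x" "p2 \<subseteq> {1..n}" "c p2 = x" "p1 \<noteq> p2"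
    and y_sets: "q1 \<subseteq> {1..n}" "c q1 = y" "q2 \<subseteq> {1..n}" "c q2 = y" "q1 \<noteq> q2"
  shows False
proof -
  let ?P = "{Z. Z \<subseteq> {1..n} \<and> c Z = x}" and ?Q = "{Z. Z \<subseteq> {1..n} \<and> c Z = y}"
  have "finite ?P" "finite ?Q"
    by (rule finite_subset[of _ "Pow {1..n}"]; auto)+
  moreover have "p1 \<in> ?P" "q1 \<in> ?Q"
    using x_sets y_sets by simp_all
  ultimately obtain p q where "p \<in> ?P" "\<forall>v \<in> ?P. \<not> p \<subset> v" "q \<in> ?Q" "\<forall>v \<in> ?Q. \<not> v \<subset> q"
    using ex_psubset_maximal[of ?P p1] ex_psubset_minimal[of ?Q q1] by blast
  then have p: "p \<subseteq> {1..n}" "c p = x" "\<And>Z. Z \<subseteq> {1..n} \<Longrightarrow> c Z = x \<Longrightarrow> \<not> p \<subset> Z"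
    and q: "q \<subseteq> {1..n}" "c q = y" "\<And>Z. Z \<subseteq> {1..n} \<Longrightarrow> c Z = y \<Longrightarrow> \<not> Z \<subset> q"
    by simp_all
  have q_min: "c Z \<noteq> y" if "Z \<subset> q" for Z
  proof
    assume "c Z = y"
    moreover have "Z \<subseteq> {1..n}"
      using that q(1) by auto
    ultimately show False
      using q(3) that by blast
  qed
  obtain p' where p': "p' \<subseteq> {1..n}" "c p' = x" "p' \<noteq> p"
    using x_sets by metis
  obtain q' where q': "q' \<subseteq> {1..n}" "c q' = y" "q' \<noteq> q"
    using y_sets by metis
  consider (b_below_q) B where "B \<subset> q" "c B = b" | (a_above_p) A where "p \<subset> A" "A \<subseteq> {1..n}" "c A = a"
    | (gap) "\<And>Z. Z \<subset> q \<Longrightarrow> c Z \<noteq> b" "\<And>Z. p \<subset> Z \<Longrightarrow> Z \<subseteq> {1..n} \<Longrightarrow> c Z \<noteq> a"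
    by blast
  then show False
  proof cases
    case b_below_q
    then show False
      using false_if_b_below_minimal_y[OF x_sets q(1,2) q_min q'] by blast
  next
    case a_above_p
    then show False
      using false_if_a_above_maximal_x[OF p p' y_sets] by blast
  next
    case gap
    interpret x_y_gap n c a b x y p q
      by unfold_locales (fact p q(1,2) q_min gap)+
    show False
      by (rule false_if_other_x_and_y_sets[OF p' q'])
  qed
qed

lemma type3_or_type4:
  assumes p0: "p0 \<subseteq> {1..n}" "c p0 = x" and q0: "q0 \<subseteq> {1..n}" "c q0 = y"
  shows "type31 n c \<or> type32 n c \<or> type41 n c \<or> type42 n c"
proof -
  consider (unique_y) "\<And>Z. Z \<subseteq> {1..n} \<Longrightarrow> c Z = y \<Longrightarrow> Z = q0"
    | (unique_x) "\<And>Z. Z \<subseteq> {1..n} \<Longrightarrow> c Z = x \<Longrightarrow> Z = p0"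
    | (neither) p1 q1 where "p1 \<subseteq> {1..n}" "c p1 = x" "p1 \<noteq> p0" "q1 \<subseteq> {1..n}" "c q1 = y" "q1 \<noteq> q0"
    by blast
  then show ?thesis
  proof cases
    case unique_y
    interpret single_y_set n c a b x y q0
    proof
      fix Z assume "Z \<subseteq> {1..n}"
      then show "c Z = y \<Longrightarrow> Z = q0" "c Z = x \<Longrightarrow> Z \<subset> q0"
        using unique_y x_below_y[OF _ q0(1) _ q0(2)] by blast+
    qed (fact q0)+
    show ?thesis
      using type42_or_type31_or_type41[OF p0] unfolding type41_iff by blast
  next
    case unique_x
    interpret dual: x_below_y n "c \<circ> cpl n" b a y x
      by (rule dual_swapped)
    interpret dual: single_y_set n "c \<circ> cpl n" b a y x "cpl n p0"
    proof
      fix Z assume "Z \<subseteq> {1..n}"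
      then show "(c \<circ> cpl n) Z = x \<Longrightarrow> Z = cpl n p0"
        using unique_x[of "cpl n Z"] by auto
      show "(c \<circ> cpl n) Z = y \<Longrightarrow> Z \<subset> cpl n p0"
        using dual.x_below_y[of Z "cpl n p0"] \<open>Z \<subseteq> {1..n}\<close> p0 by simp
    qed (use p0 in simp_all)
    have "type42 n (c \<circ> cpl n) \<or> type31 n (c \<circ> cpl n) \<or>
        (\<exists>X \<YY>. {1..n} \<notin> \<YY> \<and> type41_at n (c \<circ> cpl n) X \<YY>)"
      by (rule dual.type42_or_type31_or_type41[of "cpl n q0"]) (simp_all add: q0)
    then show ?thesis
      using type41_cpl_if_type42[of n "c \<circ> cpl n"] type32_iff_type31_cpl[of n c]
        type42_cpl_if_type41_at[of n "c \<circ> cpl n"] by auto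
  next
    case neither
    then show ?thesis
      using false_if_two_x_sets_two_y_sets[OF p0 neither(1,2) _ q0 neither(4,5)] by blast
  qed
qed

end

context rainbow_free
begin

lemma x_below_y_if_no_sandwich:
  assumes no_y_sandwich: "\<And>q1 p q2. \<not> y_sandwich n c a b x y q1 p q2"
    and no_x_sandwich: "\<And>p1 q p2. \<not> y_sandwich n c a b y x p1 q p2"
    and p0: "p0 \<subseteq> {1..n}" "c p0 = x" and q0: "q0 \<subseteq> {1..n}" "c q0 = y" and "p0 \<subset> q0"
  shows "x_below_y n c a b x y"
proof
  fix p q assume p: "p \<subseteq> {1..n}" "c p = x" and q: "q \<subseteq> {1..n}" "c q = y"
  have "\<not> q0 \<subset> p"
    using no_x_sandwich[of p0 q0 p] swap_xy p p0 q0 \<open>p0 \<subset> q0\<close>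
    unfolding y_sandwich_def y_sandwich_axioms_def by blast
  then have "p \<subset> q0"
    using x_y_comparable[OF p(1) q0(1) p(2) q0(2)] by blast
  moreover have "\<not> q \<subset> p"
    using no_y_sandwich[of q p q0] rainbow_free_axioms p q q0 \<open>p \<subset> q0\<close>
    unfolding y_sandwich_def y_sandwich_axioms_def by blast
  ultimately show "p \<subset> q"
    using x_y_comparable[OF p(1) q(1) p(2) q(2)] by blast
qed

lemma type2_or_type3_or_type4: "type2 n c \<or> type31 n c \<or> type32 n c \<or> type41 n c \<or> type42 n c"
proof -
  interpret swapped: rainbow_free n c a b y x
    by (rule swap_xy)
  have "x \<in> c ` BL n" "y \<in> c ` BL n"
    using colours by simp_all
  then obtain p0 q0 where p0: "p0 \<subseteq> {1..n}" "c p0 = x" and q0: "q0 \<subseteq> {1..n}" "c q0 = y"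
    unfolding BL_def by blast
  consider (y_sandwich) q1 p q2 where "y_sandwich n c a b x y q1 p q2"
    | (x_sandwich) p1 q p2 where "y_sandwich n c a b y x p1 q p2"
    | (no_sandwich) "\<And>q1 p q2. \<not> y_sandwich n c a b x y q1 p q2"
      "\<And>p1 q p2. \<not> y_sandwich n c a b y x p1 q p2"
    by blast
  then show ?thesis
  proof cases
    case y_sandwich
    then show ?thesis
      using y_sandwich.type2 by blast
  next
    case x_sandwich
    then show ?thesis
      using y_sandwich.type2 by blast
  next
    case no_sandwich
    consider "p0 \<subset> q0" | "q0 \<subset> p0"
      using x_y_comparable[OF p0(1) q0(1) p0(2) q0(2)] by blast
    then show ?thesis
    proof cases
      case 1
      then interpret x_below_y n c a b x y
        using x_below_y_if_no_sandwich no_sandwich p0 q0 by blast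
      show ?thesis
        using type3_or_type4[OF p0 q0] by blast
    next
      case 2
      then interpret swapped: x_below_y n c a b y x
        using swapped.x_below_y_if_no_sandwich no_sandwich p0 q0 by blast
      show ?thesis
        using swapped.type3_or_type4[OF q0 p0] by blast
    qed
  qed
qed

end

lemma rainbow_free_if_exact_coloring:
  assumes "\<not> rainbow_B2 n c" "exact_coloring n 4 c" "c {} \<noteq> c {1..n}"
  obtains x y where "rainbow_free n c (c {}) (c {1..n}) x y"
proof -
  have colours: "c ` BL n = {1..4}"
    using assms(2) unfolding exact_coloring_def .
  moreover have "{} \<in> BL n" "{1..n} \<in> BL n"
    unfolding BL_def by auto
  ultimately have ab: "{c {}, c {1..n}} \<subseteq> {1..4}"
    by blast
  then have "card ({1..4::nat} - {c {}, c {1..n}}) = 2"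
    using assms(3) by (simp add: card_Diff_subset)
  then obtain x y where xy: "{1..4::nat} - {c {}, c {1..n}} = {x, y}" "x \<noteq> y"
    by (meson card_2_iff)
  have "{1..4::nat} = {c {}, c {1..n}} \<union> ({1..4} - {c {}, c {1..n}})"
    using ab by blast
  then have "c ` BL n = {c {}, c {1..n}, x, y}"
    unfolding colours xy(1) by (simp add: insert_commute)
  moreover have "distinct [c {}, c {1..n}, x, y]"
    using xy assms(3) by (simp, blast)
  ultimately have "rainbow_free n c (c {}) (c {1..n}) x y"
    using assms(1) by unfold_locales simp_all
  then show thesis
    by (rule that)
qed

theorem lemma2p8:
  fixes n :: nat and c :: "nat set \<Rightarrow> nat"
  assumes "n \<ge> 4"
    and "exact_coloring n 4 c"
    and "c {} \<noteq> c {1..n}"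
  shows "\<not> rainbow_B2 n c \<longleftrightarrow>
           type2 n c \<or> type31 n c \<or> type32 n c \<or> type41 n c \<or> type42 n c"
proof
  assume "\<not> rainbow_B2 n c"
  then obtain x y where "rainbow_free n c (c {}) (c {1..n}) x y"
    using rainbow_free_if_exact_coloring assms(2,3) by blast
  then show "type2 n c \<or> type31 n c \<or> type32 n c \<or> type41 n c \<or> type42 n c"
    by (rule rainbow_free.type2_or_type3_or_type4)
next
  assume "type2 n c \<or> type31 n c \<or> type32 n c \<or> type41 n c \<or> type42 n c"
  then show "\<not> rainbow_B2 n c"
    using not_rainbow_B2_if_type2 not_rainbow_B2_if_type31 not_rainbow_B2_if_type32
      not_rainbow_B2_if_type41 not_rainbow_B2_if_type42 by blast
qed

end
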